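(* Let $\mathcal L$ be a sibling $\sigma_d$-invariant lamination and let $\mathcal L^p$ be its perfect part. Then $\mathcal L^p$ is a sibling $\sigma_d$-invariant lamination. If $\mathcal L$ is uncountable, then $\mathcal L^p\subset\mathcal L$ is nonempty. Every chief is either perfect or countable; in the latter case all its nondegenerate leaves are isolated.
   Context: $\mathbb S$ is the unit circle, $\sigma_d(z)=z^d$, $d\ge2$. A chord $\overline{ab}$ joins $a,b\in\mathbb S$; distinct chords cross if they meet in the open unit disk; a chord is critical if $a\ne b$ and $\sigma_d(a)=\sigma_d(b)$. A lamination is a family of pairwise non-crossing chords (leaves) containing all points of $\mathbb S$, whose union is closed; it is sibling $\sigma_d$-invariant if (1) images of leaves are leaves; (2) every leaf is the image of a leaf; (3) every non-critical leaf $\ell$ belongs to $d$ pairwise disjoint leaves $\ell_1=\ell,\dots,\ell_d$ with equal images. All laminations are assumed sibling $\sigma_d$-invariant. A lamination is nonempty if it has a nondegenerate leaf, countable if it has countably many nondegenerate leaves, uncountable otherwise, perfect if no nondegenerate leaf is isolated (isolated = not a Hausdorff limit of other leaves). The perfect part $\mathcal L^p$ is the maximal (by inclusion) perfect sublamination of $\mathcal L$, equivalently the set of leaves $\ell\in\mathcal L$ such that arbitrarily close to $\ell$ there are uncountably many leaves of $\mathcal L$. A chief is a nonempty sibling $\sigma_d$-invariant lamination minimal by inclusion among such. *)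

theory Defs
  imports "HOL-Analysis.Analysis"
begin

text \<open>The unit circle is the complex sphere of radius 1. A chord is represented by the
  set of its endpoints {a, b} (a, b on the circle; a = b gives a degenerate chord);
  the geometric chord is its convex hull, i.e. the closed segment from a to b.\<close>

definition unit_circle :: "complex set" where
  "unit_circle = sphere 0 1"

definition is_chord :: "complex set \<Rightarrow> bool" where
  "is_chord l \<longleftrightarrow> (\<exists>a b. a \<in> unit_circle \<and> b \<in> unit_circle \<and> l = {a, b})"

definition geom :: "complex set \<Rightarrow> complex set" where
  "geom l = convex hull l"

definition nondegenerate :: "complex set \<Rightarrow> bool" where
  "nondegenerate l \<longleftrightarrow> (\<exists>a b. a \<noteq> b \<and> l = {a, b})"

definition sigma_img :: "nat \<Rightarrow> complex set \<Rightarrow> complex set" where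
  "sigma_img d l = (\<lambda>z. z ^ d) ` l"

definition critical :: "nat \<Rightarrow> complex set \<Rightarrow> bool" where
  "critical d l \<longleftrightarrow> (\<exists>a b. l = {a, b} \<and> a \<noteq> b \<and> a ^ d = b ^ d)"

definition cross :: "complex set \<Rightarrow> complex set \<Rightarrow> bool" where
  "cross l1 l2 \<longleftrightarrow> l1 \<noteq> l2 \<and> geom l1 \<inter> geom l2 \<inter> ball 0 1 \<noteq> {}"

definition lamination :: "complex set set \<Rightarrow> bool" where
  "lamination L \<longleftrightarrow>
     (\<forall>l\<in>L. is_chord l) \<and>
     (\<forall>l1\<in>L. \<forall>l2\<in>L. \<not> cross l1 l2) \<and>
     (\<forall>a\<in>unit_circle. {a} \<in> L) \<and>
     closed (\<Union>l\<in>L. geom l)"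

definition sibling_invariant :: "nat \<Rightarrow> complex set set \<Rightarrow> bool" where
  "sibling_invariant d L \<longleftrightarrow>
     lamination L \<and>
     (\<forall>l\<in>L. sigma_img d l \<in> L) \<and>
     (\<forall>l\<in>L. \<exists>l'\<in>L. sigma_img d l' = l) \<and>
     (\<forall>l\<in>L. \<not> critical d l \<longrightarrow>
        (\<exists>f :: nat \<Rightarrow> complex set. f 0 = l \<and>
           (\<forall>i<d. f i \<in> L) \<and>
           (\<forall>i<d. \<forall>j<d. i \<noteq> j \<longrightarrow> geom (f i) \<inter> geom (f j) = {}) \<and>
           (\<forall>i<d. sigma_img d (f i) = sigma_img d l)))"

definition hausdist :: "complex set \<Rightarrow> complex set \<Rightarrow> real" where
  "hausdist S T = max (SUP x\<in>S. setdist {x} T) (SUP y\<in>T. setdist {y} S)"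

definition nonempty_lam :: "complex set set \<Rightarrow> bool" where
  "nonempty_lam L \<longleftrightarrow> (\<exists>l\<in>L. nondegenerate l)"

definition countable_lam :: "complex set set \<Rightarrow> bool" where
  "countable_lam L \<longleftrightarrow> countable {l\<in>L. nondegenerate l}"

definition uncountable_lam :: "complex set set \<Rightarrow> bool" where
  "uncountable_lam L \<longleftrightarrow> \<not> countable_lam L"

definition isolated_leaf :: "complex set set \<Rightarrow> complex set \<Rightarrow> bool" where
  "isolated_leaf L l \<longleftrightarrow>
     \<not> (\<forall>e>0. \<exists>l'\<in>L. l' \<noteq> l \<and> hausdist (geom l') (geom l) < e)"

definition perfect_lam :: "complex set set \<Rightarrow> bool" where
  "perfect_lam L \<longleftrightarrow> (\<forall>l\<in>L. nondegenerate l \<longrightarrow> \<not> isolated_leaf L l)"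

definition perfect_part :: "complex set set \<Rightarrow> complex set set" where
  "perfect_part L = {l\<in>L. \<forall>e>0.
      uncountable {l'\<in>L. hausdist (geom l') (geom l) < e}}"

definition chief :: "nat \<Rightarrow> complex set set \<Rightarrow> bool" where
  "chief d L \<longleftrightarrow> sibling_invariant d L \<and> nonempty_lam L \<and>
     (\<forall>L'. L' \<subseteq> L \<and> sibling_invariant d L' \<and> nonempty_lam L' \<longrightarrow> L' = L)"

end

theory Submission
  imports Defs
begin

(* Leaves are compared by the distance between their endpoint pairs, which has the same small
   balls as the Hausdorff distance, makes the space of chords compact and sigma_d d-Lipschitz.
   The perfect part consists of the leaves near which there are uncountably many leaves; the
   same construction with "infinitely many" yields exactly the non-isolated leaves. For either
   notion the selected leaves form a closed sublamination (limits of leaves are leaves since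
   leaves do not cross), images are handled by the Lipschitz bound, and preimages and siblings
   come from compactness: the leaves mapped near l, resp. the sibling families of leaves near l,
   accumulate near the finite fibre of sigma_d, and one of the finitely many candidates in that
   fibre is approximated by "many" of them; disjointness of siblings passes to the limit because
   the limit is non-critical. A condensation argument gives a nondegenerate leaf in the perfect
   part of an uncountable lamination. For a chief, the non-isolated leaves form a sibling
   invariant sublamination, hence by minimality either contain no nondegenerate leaf (then all
   leaves are isolated, so there are countably many) or are the whole chief (then it is perfect). *)

lemma lamination_chord: "lamination L \<Longrightarrow> l \<in> L \<Longrightarrow> is_chord l"
  unfolding lamination_def by (elim conjE) (erule bspec)

lemma lamination_point_leaf: "lamination L \<Longrightarrow> cmod a = 1 \<Longrightarrow> {a} \<in> L"
  unfolding lamination_def unit_circle_def by auto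

lemma lamination_closed: "lamination L \<Longrightarrow> closed (\<Union>l\<in>L. geom l)"
  unfolding lamination_def by blast

lemma lamination_no_cross: "lamination L \<Longrightarrow> l1 \<in> L \<Longrightarrow> l2 \<in> L \<Longrightarrow> \<not> cross l1 l2"
  unfolding lamination_def by blast

lemma sibling_invariant_lamination: "sibling_invariant d L \<Longrightarrow> lamination L"
  unfolding sibling_invariant_def by (elim conjE)

lemma sibling_invariant_image: "sibling_invariant d L \<Longrightarrow> l \<in> L \<Longrightarrow> sigma_img d l \<in> L"
  unfolding sibling_invariant_def by (elim conjE) (erule bspec)

lemma sibling_invariant_preimage:
  "sibling_invariant d L \<Longrightarrow> l \<in> L \<Longrightarrow> \<exists>l'\<in>L. sigma_img d l' = l"
  unfolding sibling_invariant_def by (elim conjE) (erule bspec)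

lemma is_chord_iff: "is_chord l \<longleftrightarrow> (\<exists>a b. cmod a = 1 \<and> cmod b = 1 \<and> l = {a, b})"
  unfolding is_chord_def unit_circle_def by auto

lemma is_chordE:
  assumes "is_chord l"
  obtains a b where "cmod a = 1" "cmod b = 1" "l = {a, b}"
  using assms unfolding is_chord_iff by blast

lemma is_chord_pair: "cmod a = 1 \<Longrightarrow> cmod b = 1 \<Longrightarrow> is_chord {a, b}"
  unfolding is_chord_def unit_circle_def by auto

lemma geom_pair: "geom {a, b} = closed_segment a b"
  unfolding geom_def by (simp add: segment_convex_hull)

lemma geom_singleton: "geom {a} = {a}"
  unfolding geom_def by simp

lemma sigma_img_pair: "sigma_img d {a, b} = {a ^ d, b ^ d}"
  unfolding sigma_img_def by simp

lemma is_chord_sigma_img: "is_chord l \<Longrightarrow> is_chord (sigma_img d l)"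
  by (elim is_chordE) (simp add: sigma_img_pair is_chord_pair norm_power)

section \<open>A metric on chords\<close>

definition pair_dist :: "complex \<times> complex \<Rightarrow> complex \<times> complex \<Rightarrow> real" where
  "pair_dist x y = min (max (cmod (fst x - fst y)) (cmod (snd x - snd y)))
                       (max (cmod (fst x - snd y)) (cmod (snd x - fst y)))"

definition endpoints :: "complex set \<Rightarrow> complex \<times> complex" where
  "endpoints l = (SOME p. l = {fst p, snd p})"

definition chord_dist :: "complex set \<Rightarrow> complex set \<Rightarrow> real" where
  "chord_dist l l' = pair_dist (endpoints l) (endpoints l')"

lemma pair_dist_swap_left: "pair_dist (b, a) y = pair_dist (a, b) y"
  unfolding pair_dist_def by (simp add: norm_minus_commute min.commute max.commute)

lemma pair_dist_swap_right: "pair_dist x (b, a) = pair_dist x (a, b)"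
  unfolding pair_dist_def by (simp add: norm_minus_commute min.commute max.commute)

lemma pair_dist_commute: "pair_dist x y = pair_dist y x"
  unfolding pair_dist_def by (simp add: norm_minus_commute min.commute max.commute)

lemma pair_dist_nonneg: "0 \<le> pair_dist x y"
  unfolding pair_dist_def by (simp add: le_max_iff_disj)

lemma pair_dist_cases:
  "pair_dist (a, b) (c, e) = max (cmod (a - c)) (cmod (b - e)) \<or>
   pair_dist (a, b) (c, e) = max (cmod (a - e)) (cmod (b - c))"
  unfolding pair_dist_def by (simp add: min_def)

lemma pair_dist_le_straight: "pair_dist (a, b) (c, e) \<le> max (cmod (a - c)) (cmod (b - e))"
  unfolding pair_dist_def by simp

lemma pair_dist_le_crossed: "pair_dist (a, b) (c, e) \<le> max (cmod (a - e)) (cmod (b - c))"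
  unfolding pair_dist_def by simp

lemma norm_diff_triangle: "cmod (u - w) \<le> cmod (u - v) + cmod (v - w)"
  using dist_triangle[of u w v] by (simp add: dist_norm)

lemma pair_dist_triangle: "pair_dist x z \<le> pair_dist x y + pair_dist y z"
proof -
  obtain a b c e f g where xyz: "x = (a, b)" "y = (c, e)" "z = (f, g)"
    by (cases x, cases y, cases z) auto
  have max_add: "p \<le> r + u \<Longrightarrow> q \<le> s + v \<Longrightarrow> max p q \<le> max r s + max u v"
    for p q r s u v :: real
    by (simp add: max_def)
  have "max (cmod (a-f)) (cmod (b-g)) \<le> max (cmod (a-c)) (cmod (b-e)) + max (cmod (c-f)) (cmod (e-g))"
    "max (cmod (a-g)) (cmod (b-f)) \<le> max (cmod (a-c)) (cmod (b-e)) + max (cmod (c-g)) (cmod (e-f))"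
    "max (cmod (a-g)) (cmod (b-f)) \<le> max (cmod (a-e)) (cmod (b-c)) + max (cmod (e-g)) (cmod (c-f))"
    "max (cmod (a-f)) (cmod (b-g)) \<le> max (cmod (a-e)) (cmod (b-c)) + max (cmod (e-f)) (cmod (c-g))"
    by (intro max_add norm_diff_triangle)+
  moreover have "max (cmod (c-g)) (cmod (e-f)) = max (cmod (e-f)) (cmod (c-g))"
    "max (cmod (c-f)) (cmod (e-g)) = max (cmod (e-g)) (cmod (c-f))"
    by (simp_all add: max.commute)
  ultimately show ?thesis
    unfolding xyz
    using pair_dist_cases[of a b c e] pair_dist_cases[of c e f g]
      pair_dist_le_straight[of a b f g] pair_dist_le_crossed[of a b f g]
    by (elim disjE) linarith+
qed

lemma pair_dist_eq_0: "pair_dist (a, b) (c, e) = 0 \<Longrightarrow> {a, b} = {c, e}"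
  unfolding pair_dist_def by (auto simp: min_def max_def split: if_splits)

lemma endpoints_cases: "endpoints {a, b} = (a, b) \<or> endpoints {a, b} = (b, a)"
proof -
  have "{a, b} = {fst (endpoints {a, b}), snd (endpoints {a, b})}"
    unfolding endpoints_def by (rule someI[of _ "(a, b)"]) simp
  then show ?thesis by (cases "endpoints {a, b}") (auto simp: doubleton_eq_iff)
qed

lemma chord_dist_pair: "chord_dist {a, b} {c, e} = pair_dist (a, b) (c, e)"
  using endpoints_cases[of a b] endpoints_cases[of c e]
  unfolding chord_dist_def by (auto simp: pair_dist_swap_left pair_dist_swap_right)

lemma chord_dist_commute: "chord_dist l l' = chord_dist l' l"
  unfolding chord_dist_def by (rule pair_dist_commute)

lemma chord_dist_triangle: "chord_dist l n \<le> chord_dist l m + chord_dist m n"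
  unfolding chord_dist_def by (rule pair_dist_triangle)

lemma chord_dist_nonneg: "0 \<le> chord_dist l l'"
  unfolding chord_dist_def by (rule pair_dist_nonneg)

lemma chord_dist_eq_0: "chord_dist {a, b} {c, e} = 0 \<Longrightarrow> {a, b} = {c, e}"
  by (simp add: chord_dist_pair pair_dist_eq_0)

lemma chord_dist_pos: "{a, b} \<noteq> {c, e} \<Longrightarrow> 0 < chord_dist {a, b} {c, e}"
  using chord_dist_eq_0 chord_dist_nonneg[of "{a, b}" "{c, e}"] by force

lemma chord_dist_singleton: "chord_dist {b} {a} = cmod (b - a)"
  using chord_dist_pair[of b b a a] by (simp add: pair_dist_def)

lemma chord_dist_singleton_pair: "cmod (a - b) / 2 \<le> chord_dist {w} {a, b}"
proof -
  have "chord_dist {w} {a, b} = max (cmod (w - a)) (cmod (w - b))"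
    using chord_dist_pair[of w w a b] by (simp add: pair_dist_def)
  moreover have "cmod (a - b) \<le> cmod (w - a) + cmod (w - b)"
    using norm_diff_triangle[of a b w] by (simp add: norm_minus_commute)
  ultimately show ?thesis by simp
qed

lemma length_lt_if_chord_dist_lt:
  assumes "chord_dist {u, v} {p, q} < e"
  shows "cmod (u - v) < cmod (p - q) + 2 * e"
proof -
  have "(cmod (u - p) < e \<and> cmod (v - q) < e) \<or> (cmod (u - q) < e \<and> cmod (v - p) < e)"
    using assms pair_dist_cases[of u v p q] by (auto simp: chord_dist_pair)
  moreover have "cmod (u - v) \<le> cmod (u - p) + cmod (p - q) + cmod (v - q)"
    using norm_diff_triangle[of u v p] norm_diff_triangle[of p v q]
    by (simp add: norm_minus_commute[of q v])
  moreover have "cmod (u - v) \<le> cmod (u - q) + cmod (p - q) + cmod (v - p)"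
    using norm_diff_triangle[of u v q] norm_diff_triangle[of q v p]
    by (simp add: norm_minus_commute[of q p] norm_minus_commute[of p v])
  ultimately show ?thesis by linarith
qed

lemma chord_dist_tendsto_0:
  assumes "a \<longlonglongrightarrow> a0" "b \<longlonglongrightarrow> b0"
  shows "(\<lambda>n. chord_dist {a n, b n} {a0, b0}) \<longlonglongrightarrow> 0"
proof (rule Lim_null_comparison)
  have "(\<lambda>n. max (cmod (a n - a0)) (cmod (b n - b0))) \<longlonglongrightarrow> max 0 0"
    using assms by (intro tendsto_max tendsto_norm_zero) (auto simp: LIM_zero_iff)
  then show "(\<lambda>n. max (cmod (a n - a0)) (cmod (b n - b0))) \<longlonglongrightarrow> 0" by simp
  show "\<forall>\<^sub>F n in sequentially.
      norm (chord_dist {a n, b n} {a0, b0}) \<le> max (cmod (a n - a0)) (cmod (b n - b0))"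
    by (simp add: chord_dist_pair pair_dist_nonneg pair_dist_le_straight)
qed

lemma chord_endpoints_converge:
  assumes "\<And>n. is_chord (l n)" "(\<lambda>n. chord_dist (l n) {a, b}) \<longlonglongrightarrow> 0"
  obtains an bn where "\<And>n. l n = {an n, bn n}" "\<And>n. cmod (an n) = 1" "\<And>n. cmod (bn n) = 1"
    "an \<longlonglongrightarrow> a" "bn \<longlonglongrightarrow> b"
proof -
  have "\<exists>a' b'. l n = {a', b'} \<and> cmod a' = 1 \<and> cmod b' = 1 \<and>
      max (cmod (a' - a)) (cmod (b' - b)) = chord_dist (l n) {a, b}" for n
  proof -
    obtain u v where uv: "cmod u = 1" "cmod v = 1" "l n = {u, v}"
      using assms(1)[of n] by (rule is_chordE)
    have dist: "chord_dist (l n) {a, b} = pair_dist (u, v) (a, b)"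
      by (simp add: uv(3) chord_dist_pair)
    from pair_dist_cases[of u v a b] show ?thesis
    proof
      assume "pair_dist (u, v) (a, b) = max (cmod (u - a)) (cmod (v - b))"
      then show ?thesis using uv dist by (intro exI[of _ u] exI[of _ v]) simp
    next
      assume "pair_dist (u, v) (a, b) = max (cmod (u - b)) (cmod (v - a))"
      then have "max (cmod (v - a)) (cmod (u - b)) = chord_dist (l n) {a, b}"
        using dist by (simp add: max.commute)
      moreover have "l n = {v, u}" using uv(3) by auto
      ultimately show ?thesis using uv by (intro exI[of _ v] exI[of _ u]) simp
    qed
  qed
  then obtain an bn where ab: "\<And>n. l n = {an n, bn n}" "\<And>n. cmod (an n) = 1"
    "\<And>n. cmod (bn n) = 1" "\<And>n. max (cmod (an n - a)) (cmod (bn n - b)) = chord_dist (l n) {a, b}"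
    by metis
  have "cmod (an n - a) \<le> chord_dist (l n) {a, b}" "cmod (bn n - b) \<le> chord_dist (l n) {a, b}" for n
    by (metis ab(4) max.cobounded1) (metis ab(4) max.cobounded2)
  then have "(\<lambda>n. an n - a) \<longlonglongrightarrow> 0" "(\<lambda>n. bn n - b) \<longlonglongrightarrow> 0"
    by (auto intro!: Lim_null_comparison[OF always_eventually assms(2)])
  then have "an \<longlonglongrightarrow> a" "bn \<longlonglongrightarrow> b" by (simp_all add: LIM_zero_iff)
  with ab(1-3) show ?thesis by (rule that)
qed

lemma circle_pairs_convergent_subseq:
  fixes a b :: "nat \<Rightarrow> complex"
  assumes "\<And>n. cmod (a n) = 1" "\<And>n. cmod (b n) = 1"
  obtains r a0 b0 where "strict_mono r" "cmod a0 = 1" "cmod b0 = 1"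
    "(a \<circ> r) \<longlonglongrightarrow> a0" "(b \<circ> r) \<longlonglongrightarrow> b0"
proof -
  have "seq_compact (sphere (0::complex) 1 \<times> sphere (0::complex) 1)"
    by (intro compact_imp_seq_compact compact_Times compact_sphere)
  moreover have "\<forall>n. (a n, b n) \<in> sphere 0 1 \<times> sphere 0 1" using assms by auto
  ultimately obtain p r where p: "p \<in> sphere 0 1 \<times> sphere 0 1" "strict_mono r"
    "((\<lambda>n. (a n, b n)) \<circ> r) \<longlonglongrightarrow> p"
    by (rule seq_compactE)
  have "(\<lambda>n. fst ((a (r n), b (r n)))) \<longlonglongrightarrow> fst p"
    using p(3) by (intro tendsto_fst) (simp add: o_def)
  moreover have "(\<lambda>n. snd ((a (r n), b (r n)))) \<longlonglongrightarrow> snd p"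
    using p(3) by (intro tendsto_snd) (simp add: o_def)
  ultimately show ?thesis using p that[of r "fst p" "snd p"] by (auto simp: o_def)
qed

lemma chord_convergent_subseq:
  fixes l :: "nat \<Rightarrow> complex set"
  assumes "\<And>n. is_chord (l n)"
  obtains r a0 b0 where "strict_mono r" "cmod a0 = 1" "cmod b0 = 1"
    "(\<lambda>n. chord_dist (l (r n)) {a0, b0}) \<longlonglongrightarrow> 0"
proof -
  have "\<forall>n. \<exists>a b. cmod a = 1 \<and> cmod b = 1 \<and> l n = {a, b}"
    using assms by (simp add: is_chord_iff)
  then obtain a b where ab: "\<And>n. cmod (a n) = 1" "\<And>n. cmod (b n) = 1" "\<And>n. l n = {a n, b n}"
    by metis
  obtain r a0 b0 where r: "strict_mono r" "cmod a0 = 1" "cmod b0 = 1"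
    "(a \<circ> r) \<longlonglongrightarrow> a0" "(b \<circ> r) \<longlonglongrightarrow> b0"
    using circle_pairs_convergent_subseq[of a b] ab by metis
  have "(\<lambda>n. chord_dist {(a \<circ> r) n, (b \<circ> r) n} {a0, b0}) \<longlonglongrightarrow> 0"
    using r(4,5) by (rule chord_dist_tendsto_0)
  then show ?thesis using that[OF r(1-3)] ab(3) by (simp add: o_def)
qed

lemma chord_dist_approx_seq:
  assumes "\<And>e. e > 0 \<Longrightarrow> \<exists>x\<in>S. chord_dist x k < e"
  obtains x where "\<And>n. x n \<in> S" "(\<lambda>n. chord_dist (x n) k) \<longlonglongrightarrow> 0"
proof -
  have "\<forall>n. \<exists>x\<in>S. chord_dist x k < inverse (real (Suc n))"
    using assms by simp
  then obtain x where x: "\<And>n. x n \<in> S" "\<And>n. chord_dist (x n) k < inverse (real (Suc n))"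
    by metis
  have "(\<lambda>n. chord_dist (x n) k) \<longlonglongrightarrow> 0"
    by (rule Lim_null_comparison[OF _ LIMSEQ_inverse_real_of_nat])
      (use x(2) chord_dist_nonneg in \<open>auto intro: always_eventually less_imp_le\<close>)
  then show ?thesis using that x(1) by blast
qed

section \<open>Chord distance versus Hausdorff distance\<close>

lemma weighted_sq_dist_decomposition:
  fixes a c e :: complex
  shows "(1 - t) * (cmod (a - c))\<^sup>2 + t * (cmod (a - e))\<^sup>2
       = (cmod (a - ((1 - t) *\<^sub>R c + t *\<^sub>R e)))\<^sup>2 + t * (1 - t) * (cmod (c - e))\<^sup>2"
  unfolding cmod_power2 by (simp add: power2_eq_square algebra_simps)

lemma norm_le_max_on_segment:
  assumes "x \<in> closed_segment c e"
  shows "cmod (a - x) \<le> max (cmod (a - c)) (cmod (a - e))"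
proof -
  have "closed_segment c e \<subseteq> cball a (max (cmod (a - c)) (cmod (a - e)))"
    by (intro closed_segment_subset) (auto simp: dist_norm)
  then show ?thesis using assms by (auto simp: dist_norm)
qed

lemma near_endpoint_if_near_chord:
  fixes a c e x :: complex
  assumes "cmod a = 1" "cmod c = 1" "cmod e = 1" "x \<in> closed_segment c e" "cmod (a - x) < h"
  shows "cmod (a - c) < sqrt (h\<^sup>2 + 2 * h) \<or> cmod (a - e) < sqrt (h\<^sup>2 + 2 * h)"
proof -
  obtain t where t: "0 \<le> t" "t \<le> 1" "x = (1 - t) *\<^sub>R c + t *\<^sub>R e"
    using assms(4) by (auto simp: in_segment)
  have h0: "h > 0" using assms(5) norm_ge_zero[of "a - x"] by linarith
  have V1: "(1 - t) * (cmod (a - c))\<^sup>2 + t * (cmod (a - e))\<^sup>2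
      = (cmod (a - x))\<^sup>2 + t * (1 - t) * (cmod (c - e))\<^sup>2"
    using weighted_sq_dist_decomposition[of t a c e] t by simp
  have "(1 - t) * (cmod (0 - c))\<^sup>2 + t * (cmod (0 - e))\<^sup>2
      = (cmod (0 - x))\<^sup>2 + t * (1 - t) * (cmod (c - e))\<^sup>2"
    using weighted_sq_dist_decomposition[of t 0 c e] t by simp
  then have "1 - (cmod x)\<^sup>2 = t * (1 - t) * (cmod (c - e))\<^sup>2"
    using assms(2,3) by simp
  moreover have "1 - (cmod x)\<^sup>2 < 2 * h"
  proof (cases "h \<le> 1")
    case True
    have "cmod x > 1 - h"
      using norm_triangle_ineq2[of a x] assms(1,5) by linarith
    then have "(1 - h)\<^sup>2 \<le> (cmod x)\<^sup>2" using True by (intro power_mono) auto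
    moreover have "(1 - h)\<^sup>2 = 1 - 2 * h + h\<^sup>2" by (simp add: power2_eq_square algebra_simps)
    moreover have "h\<^sup>2 > 0" using h0 by simp
    ultimately show ?thesis by linarith
  qed (use zero_le_power2[of "cmod x"] in linarith)
  moreover have "(cmod (a - x))\<^sup>2 < h\<^sup>2" using assms(5) by (simp add: power_strict_mono)
  ultimately have S: "(1 - t) * (cmod (a - c))\<^sup>2 + t * (cmod (a - e))\<^sup>2 < h\<^sup>2 + 2 * h"
    using V1 by linarith
  have "min ((cmod (a - c))\<^sup>2) ((cmod (a - e))\<^sup>2)
      = (1 - t) * min ((cmod (a - c))\<^sup>2) ((cmod (a - e))\<^sup>2) + t * min ((cmod (a - c))\<^sup>2) ((cmod (a - e))\<^sup>2)"
    by (simp add: algebra_simps)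
  also have "\<dots> \<le> (1 - t) * (cmod (a - c))\<^sup>2 + t * (cmod (a - e))\<^sup>2"
    using t by (intro add_mono mult_left_mono) auto
  finally have "min ((cmod (a - c))\<^sup>2) ((cmod (a - e))\<^sup>2)
      \<le> (1 - t) * (cmod (a - c))\<^sup>2 + t * (cmod (a - e))\<^sup>2" .
  with S have "(cmod (a - c))\<^sup>2 < h\<^sup>2 + 2 * h \<or> (cmod (a - e))\<^sup>2 < h\<^sup>2 + 2 * h"
    by (auto simp: min_def split: if_splits)
  then show ?thesis
    using real_less_rsqrt by blast
qed

lemma setdist_le_hausdist:
  fixes S T :: "complex set"
  assumes "x \<in> S" "bounded S" "T \<noteq> {}"
  shows "setdist {x} T \<le> hausdist S T"
proof -
  obtain t where t: "t \<in> T" using assms(3) by auto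
  obtain B where B: "\<And>y. y \<in> S \<Longrightarrow> norm y \<le> B" using assms(2) bounded_iff by blast
  have "bdd_above ((\<lambda>x. setdist {x} T) ` S)"
  proof (rule bdd_aboveI2)
    fix y assume "y \<in> S"
    have "setdist {y} T \<le> dist y t" using t by (simp add: setdist_le_dist)
    also have "\<dots> \<le> norm y + norm t" by (simp add: dist_norm norm_triangle_ineq4)
    also have "\<dots> \<le> B + norm t" using B \<open>y \<in> S\<close> by simp
    finally show "setdist {y} T \<le> B + norm t" .
  qed
  then have "setdist {x} T \<le> (SUP x\<in>S. setdist {x} T)"
    by (rule cSUP_upper[OF assms(1)])
  then show ?thesis unfolding hausdist_def by simp
qed

lemma hausdist_commute: "hausdist S T = hausdist T S"
  unfolding hausdist_def by (simp add: max.commute)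

lemma hausdist_closed_segment_le:
  fixes a b c e :: complex
  shows "hausdist (closed_segment a b) (closed_segment c e) \<le> max (cmod (a - c)) (cmod (b - e))"
proof -
  have one: "(SUP x\<in>closed_segment p q. setdist {x} (closed_segment r s))
      \<le> max (cmod (p - r)) (cmod (q - s))" for p q r s :: complex
  proof (rule cSUP_least)
    show "closed_segment p q \<noteq> {}" by simp
    fix x assume "x \<in> closed_segment p q"
    then obtain u where u: "0 \<le> u" "u \<le> 1" "x = (1 - u) *\<^sub>R p + u *\<^sub>R q"
      by (auto simp: in_segment)
    define y where "y = (1 - u) *\<^sub>R r + u *\<^sub>R s"
    have y: "y \<in> closed_segment r s" unfolding y_def using u by (auto simp: in_segment)
    have "setdist {x} (closed_segment r s) \<le> dist x y" using y by (simp add: setdist_le_dist)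
    also have "dist x y = norm ((1 - u) *\<^sub>R (p - r) + u *\<^sub>R (q - s))"
      unfolding u y_def dist_norm by (simp add: algebra_simps)
    also have "\<dots> \<le> (1 - u) * cmod (p - r) + u * cmod (q - s)"
      using u norm_triangle_ineq[of "(1 - u) *\<^sub>R (p - r)" "u *\<^sub>R (q - s)"] by simp
    also have "\<dots> \<le> max (cmod (p - r)) (cmod (q - s))"
      using u convex_bound_le[of "cmod (p - r)" "max (cmod (p - r)) (cmod (q - s))"
          "cmod (q - s)" "1 - u" u]
      by simp
    finally show "setdist {x} (closed_segment r s) \<le> max (cmod (p - r)) (cmod (q - s))" .
  qed
  show ?thesis
    using one[of a b c e] one[of c e a b] unfolding hausdist_def
    by (simp add: norm_minus_commute)
qed

lemma hausdist_le_chord_dist: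
  assumes "is_chord x" "is_chord y"
  shows "hausdist (geom x) (geom y) \<le> chord_dist x y"
proof -
  obtain a b c e where x: "x = {a, b}" and y: "y = {c, e}"
    using assms by (meson is_chordE)
  have "hausdist (geom x) (geom y) \<le> max (cmod (a - c)) (cmod (b - e))"
    unfolding x y geom_pair by (rule hausdist_closed_segment_le)
  moreover have "hausdist (geom x) (geom y) \<le> max (cmod (a - e)) (cmod (b - c))"
    unfolding x y geom_pair by (subst (2) closed_segment_commute) (rule hausdist_closed_segment_le)
  ultimately show ?thesis unfolding x y chord_dist_pair pair_dist_def by simp
qed

lemma pair_dist_lt_if_endpoints_near:
  assumes "r \<ge> 0"
    and "cmod (a - c) < r \<or> cmod (a - e) < r" "cmod (b - c) < r \<or> cmod (b - e) < r"
    and "cmod (c - a) < r \<or> cmod (c - b) < r" "cmod (e - a) < r \<or> cmod (e - b) < r"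
  shows "pair_dist (a, b) (c, e) < 3 * r"
proof -
  have sym: "cmod (u - v) = cmod (v - u)" for u v :: complex by (rule norm_minus_commute)
  have "cmod (b - e) \<le> cmod (b - c) + cmod (c - a) + cmod (a - e)"
    "cmod (a - e) \<le> cmod (a - c) + cmod (c - b) + cmod (b - e)"
    "cmod (a - c) \<le> cmod (a - e) + cmod (e - b) + cmod (b - c)"
    "cmod (b - c) \<le> cmod (b - e) + cmod (e - a) + cmod (a - c)"
    using norm_diff_triangle[of b e c] norm_diff_triangle[of c e a]
      norm_diff_triangle[of a e c] norm_diff_triangle[of c e b]
      norm_diff_triangle[of a c e] norm_diff_triangle[of e c b]
      norm_diff_triangle[of b c e] norm_diff_triangle[of e c a]
    by linarith+
  then show ?thesis
    using assms pair_dist_le_straight[of a b c e] pair_dist_le_crossed[of a b c e]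
      sym[of c a] sym[of c b] sym[of e a] sym[of e b]
    by (smt (verit) max_less_iff_conj)
qed

lemma chord_dist_small_if_hausdist_small:
  assumes "e > 0"
  obtains \<eta> where "\<eta> > 0"
    "\<And>x y. is_chord x \<Longrightarrow> is_chord y \<Longrightarrow> hausdist (geom x) (geom y) < \<eta> \<Longrightarrow> chord_dist x y < e"
proof -
  define h where "h = min 1 (e\<^sup>2 / 100)"
  define r where "r = sqrt (h\<^sup>2 + 2 * h)"
  have h: "h > 0" "h \<le> 1" "h \<le> e\<^sup>2 / 100" using assms by (auto simp: h_def)
  have "h\<^sup>2 \<le> h" using h by (simp add: power2_eq_square mult_le_cancel_right1)
  then have "h\<^sup>2 + 2 * h \<le> 3 * (e\<^sup>2 / 100)" using h by linarith
  also have "\<dots> < (e / 3)\<^sup>2" using assms by (simp add: power2_eq_square)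
  finally have "r < e / 3"
    unfolding r_def using assms by (intro real_less_lsqrt) auto
  then have r: "0 \<le> r" "3 * r < e"
    unfolding r_def using h by auto
  have near: "cmod (z - p) < r \<or> cmod (z - q) < r"
    if z: "z \<in> {u, v}" "cmod z = 1" and pq: "cmod p = 1" "cmod q = 1"
      and H: "hausdist (closed_segment u v) (closed_segment p q) < h"
    for z u v p q :: complex
  proof -
    have "setdist {z} (closed_segment p q) \<le> hausdist (closed_segment u v) (closed_segment p q)"
      using z(1) by (intro setdist_le_hausdist) (auto intro: compact_imp_bounded)
    then have "setdist {z} (closed_segment p q) < h" using H by linarith
    then obtain z' y where "z' \<in> {z}" "y \<in> closed_segment p q" "dist z' y < h"
      by (rule setdist_ltE) auto
    then show ?thesis
      unfolding r_def using near_endpoint_if_near_chord[of z p q y h] z pq by (auto simp: dist_norm)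
  qed
  show ?thesis
  proof (rule that)
    fix x y assume "is_chord x" "is_chord y" and H: "hausdist (geom x) (geom y) < h"
    then obtain a b p q where ab: "cmod a = 1" "cmod b = 1" "x = {a, b}"
      and pq: "cmod p = 1" "cmod q = 1" "y = {p, q}"
      by (meson is_chordE)
    have H': "hausdist (closed_segment a b) (closed_segment p q) < h"
      "hausdist (closed_segment p q) (closed_segment a b) < h"
      using H by (simp_all add: ab(3) pq(3) geom_pair hausdist_commute)
    have "pair_dist (a, b) (p, q) < 3 * r"
      using r(1) near[of a a b p q] near[of b a b p q] near[of p p q a b] near[of q p q a b] ab pq H'
      by (intro pair_dist_lt_if_endpoints_near) auto
    then show "chord_dist x y < e" using r(2) by (simp add: ab(3) pq(3) chord_dist_pair)
  qed (use h in simp)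
qed

section \<open>The map \<open>\<sigma>\<^sub>d\<close> on chords\<close>

lemma chord_dist_sigma_img_le:
  assumes "is_chord x" "is_chord y"
  shows "chord_dist (sigma_img d x) (sigma_img d y) \<le> d * chord_dist x y"
proof -
  obtain a b c e where ab: "cmod a = 1" "cmod b = 1" "x = {a, b}"
    and ce: "cmod c = 1" "cmod e = 1" "y = {c, e}"
    using assms by (meson is_chordE)
  have lip: "max (cmod (u ^ d - v ^ d)) (cmod (w ^ d - z ^ d)) \<le> d * max (cmod (u - v)) (cmod (w - z))"
    if "u \<in> {a, b}" "w \<in> {a, b}" "v \<in> {c, e}" "z \<in> {c, e}" for u v w z
  proof -
    have "cmod (u ^ d - v ^ d) \<le> d * cmod (u - v)" "cmod (w ^ d - z ^ d) \<le> d * cmod (w - z)"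
      using that ab ce norm_power_diff[of u v d] norm_power_diff[of w z d] by auto
    then have "max (cmod (u ^ d - v ^ d)) (cmod (w ^ d - z ^ d)) \<le> max (d * cmod (u - v)) (d * cmod (w - z))"
      by (rule max.mono)
    then show ?thesis by (simp add: max_mult_distrib_left)
  qed
  have "pair_dist (a ^ d, b ^ d) (c ^ d, e ^ d) \<le> d * pair_dist (a, b) (c, e)"
    using pair_dist_cases[of a b c e] lip[of a b c e] lip[of a b e c]
      pair_dist_le_straight[of "a ^ d" "b ^ d" "c ^ d" "e ^ d"]
      pair_dist_le_crossed[of "a ^ d" "b ^ d" "c ^ d" "e ^ d"]
    by auto
  then show ?thesis by (simp add: ab(3) ce(3) sigma_img_pair chord_dist_pair)
qed

lemma finite_sigma_img_fibre:
  assumes "d > 0" "finite m"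
  shows "finite {l. sigma_img d l = m}"
proof -
  have "{l. sigma_img d l = m} \<subseteq> Pow (\<Union>u\<in>m. {z::complex. z ^ d = u})"
    unfolding sigma_img_def by auto
  moreover have "finite (\<Union>u\<in>m. {z::complex. z ^ d = u})"
    using assms by (intro finite_UN_I) auto
  ultimately show ?thesis by (meson finite_Pow_iff finite_subset)
qed

lemma finite_sigma_img_chord_fibre:
  assumes "d > 0"
  shows "finite {l. is_chord l \<and> sigma_img d l = m}"
proof (cases "finite m")
  case True
  show ?thesis
    by (rule finite_subset[OF _ finite_sigma_img_fibre[OF assms True]]) auto
next
  case False
  have "finite (sigma_img d l)" if "is_chord l" for l
    using that by (auto elim: is_chordE simp: sigma_img_pair)
  then have "{l. is_chord l \<and> sigma_img d l = m} = {}" using False by blast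
  then show ?thesis by (simp only: finite.emptyI)
qed

lemma roots_of_unity_separated:
  assumes "d > 0"
  obtains \<delta> :: real where "\<delta> > 0"
    "\<And>z w. cmod z = 1 \<Longrightarrow> cmod w = 1 \<Longrightarrow> z ^ d = w ^ d \<Longrightarrow> z \<noteq> w \<Longrightarrow> \<delta> \<le> cmod (z - w)"
proof -
  define R where "R = {u::complex. u ^ d = 1} - {1}"
  have finR: "finite R" unfolding R_def using assms by (simp add: finite_roots_unity)
  define \<delta> where "\<delta> = Min (insert 1 ((\<lambda>u. cmod (u - 1)) ` R))"
  have pos: "\<delta> > 0"
    unfolding \<delta>_def using finR by (auto simp: R_def)
  have "\<delta> \<le> cmod (z - w)" if "cmod z = 1" "cmod w = 1" "z ^ d = w ^ d" "z \<noteq> w" for z w :: complex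
  proof -
    have w0: "w \<noteq> 0" using that(2) by auto
    then have "z / w \<in> R" unfolding R_def using that(3,4) by (simp add: power_divide)
    moreover have "cmod (z - w) = cmod (w * (z / w - 1))"
      using w0 by (simp add: algebra_simps)
    then have "cmod (z - w) = cmod (z / w - 1)"
      using that(2) by (simp add: norm_mult)
    ultimately show ?thesis unfolding \<delta>_def using finR by (auto intro: Min_le)
  qed
  with pos show ?thesis by (rule that)
qed

lemma critical_imp_sigma_img_singleton: "critical d m \<Longrightarrow> \<exists>w. sigma_img d m = {w}"
  unfolding critical_def by (auto simp: sigma_img_pair)

text \<open>A critical chord has a single point as image, and \<open>\<sigma>\<^sub>d\<close> is \<open>d\<close>-Lipschitz for
  \<open>chord_dist\<close>.\<close>

lemma not_critical_if_near:
  assumes "is_chord m" "cmod a = 1" "cmod b = 1" "a ^ d \<noteq> b ^ d"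
    and "d * chord_dist m {a, b} < cmod (a ^ d - b ^ d) / 2"
  shows "\<not> critical d m"
proof
  assume "critical d m"
  then obtain w where w: "sigma_img d m = {w}" using critical_imp_sigma_img_singleton by blast
  have "chord_dist {w} {a ^ d, b ^ d} \<le> d * chord_dist m {a, b}"
    using chord_dist_sigma_img_le[OF assms(1) is_chord_pair[OF assms(2,3)], where d = d]
    by (simp add: w sigma_img_pair)
  then show False using assms(5) chord_dist_singleton_pair[of "a ^ d" "b ^ d" w] by linarith
qed

lemma sigma_img_eq_if_limit:
  fixes c :: "nat \<Rightarrow> complex set"
  assumes "\<And>n. is_chord (c n)" "is_chord c0" "is_chord m"
    and "(\<lambda>n. chord_dist (c n) c0) \<longlonglongrightarrow> 0"
    and "(\<lambda>n. chord_dist (sigma_img d (c n)) m) \<longlonglongrightarrow> 0"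
  shows "sigma_img d c0 = m"
proof -
  have "chord_dist (sigma_img d c0) m \<le> 0"
  proof (rule LIMSEQ_le_const)
    show "(\<lambda>n. d * chord_dist (c n) c0 + chord_dist (sigma_img d (c n)) m) \<longlonglongrightarrow> 0"
      using tendsto_add[OF tendsto_mult[OF tendsto_const assms(4)] assms(5)] by simp
    show "\<exists>N. \<forall>n\<ge>N. chord_dist (sigma_img d c0) m
        \<le> d * chord_dist (c n) c0 + chord_dist (sigma_img d (c n)) m"
    proof (intro exI allI impI)
      fix n
      have "chord_dist (sigma_img d c0) m
          \<le> chord_dist (sigma_img d c0) (sigma_img d (c n)) + chord_dist (sigma_img d (c n)) m"
        by (rule chord_dist_triangle)
      moreover have "chord_dist (sigma_img d c0) (sigma_img d (c n)) \<le> d * chord_dist c0 (c n)"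
        by (rule chord_dist_sigma_img_le[OF assms(2,1)])
      ultimately show "chord_dist (sigma_img d c0) m
          \<le> d * chord_dist (c n) c0 + chord_dist (sigma_img d (c n)) m"
        by (simp add: chord_dist_commute)
    qed
  qed
  then have "chord_dist (sigma_img d c0) m = 0"
    using chord_dist_nonneg[of "sigma_img d c0" m] by linarith
  moreover obtain a b p q where ab: "c0 = {a, b}" and pq: "m = {p, q}"
    using assms(2,3) by (meson is_chordE)
  ultimately have "chord_dist {a ^ d, b ^ d} {p, q} = 0" by (simp add: sigma_img_pair)
  then have "{a ^ d, b ^ d} = {p, q}" by (rule chord_dist_eq_0)
  then show ?thesis by (simp add: ab pq sigma_img_pair)
qed

lemma near_fibre_if_image_near:
  assumes "is_chord m" "r > 0"
  obtains \<delta> where "\<delta> > 0" "\<And>x. is_chord x \<Longrightarrow> chord_dist (sigma_img d x) m < \<delta> \<Longrightarrow>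
           \<exists>k. is_chord k \<and> sigma_img d k = m \<and> chord_dist x k < r"
proof (rule ccontr)
  assume "\<not> thesis"
  have "\<exists>x. is_chord x \<and> chord_dist (sigma_img d x) m < inverse (real (Suc n)) \<and>
      (\<forall>k. is_chord k \<and> sigma_img d k = m \<longrightarrow> r \<le> chord_dist x k)" for n
  proof (rule ccontr)
    assume "\<not> ?thesis"
    then have "\<exists>k. is_chord k \<and> sigma_img d k = m \<and> chord_dist x k < r"
      if "is_chord x" "chord_dist (sigma_img d x) m < inverse (real (Suc n))" for x
      using that by (auto simp: not_le)
    then show False using that[of "inverse (real (Suc n))"] \<open>\<not> thesis\<close> by simp
  qed
  then have "\<forall>n. \<exists>x. is_chord x \<and> chord_dist (sigma_img d x) m < inverse (real (Suc n)) \<and>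
      (\<forall>k. is_chord k \<and> sigma_img d k = m \<longrightarrow> r \<le> chord_dist x k)" by blast
  from choice[OF this] obtain x where x: "\<And>n. is_chord (x n)"
    "\<And>n. chord_dist (sigma_img d (x n)) m < inverse (real (Suc n))"
    "\<And>n k. is_chord k \<Longrightarrow> sigma_img d k = m \<Longrightarrow> r \<le> chord_dist (x n) k"
    by blast
  obtain s a b where s: "strict_mono s" "cmod a = 1" "cmod b = 1"
    "(\<lambda>n. chord_dist (x (s n)) {a, b}) \<longlonglongrightarrow> 0"
    using chord_convergent_subseq[of x] x(1) by metis
  have "(\<lambda>n. inverse (real (Suc (s n)))) \<longlonglongrightarrow> 0"
    using LIMSEQ_subseq_LIMSEQ[OF LIMSEQ_inverse_real_of_nat s(1)] by (simp add: o_def)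
  then have "(\<lambda>n. chord_dist (sigma_img d (x (s n))) m) \<longlonglongrightarrow> 0"
    by (rule Lim_null_comparison[rotated])
      (use x(2) chord_dist_nonneg in \<open>auto intro!: always_eventually less_imp_le\<close>)
  then have "sigma_img d {a, b} = m"
    using x(1) is_chord_pair[OF s(2,3)] assms(1) s(4) by (intro sigma_img_eq_if_limit) auto
  then have "r \<le> chord_dist (x (s n)) {a, b}" for n
    using x(3) is_chord_pair[OF s(2,3)] by blast
  moreover obtain N where "\<forall>n\<ge>N. chord_dist (x (s n)) {a, b} < r"
    using order_tendstoD(2)[OF s(4) assms(2)] unfolding eventually_sequentially by blast
  ultimately show False by (meson order.refl not_le)
qed

section \<open>Crossing and limits of leaves\<close>

lemma norm_sq_chord_point:
  fixes p q :: complex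
  assumes "cmod p = 1" "cmod q = 1"
  shows "(cmod ((1 - s) *\<^sub>R p + s *\<^sub>R q))^2 = 1 + s*(s-1) * (cmod (q - p))^2"
proof -
  have "(1-s) * (cmod (0 - p))^2 + s * (cmod (0 - q))^2
       = (cmod (0 - ((1-s) *\<^sub>R p + s *\<^sub>R q)))^2 + s*(1-s) * (cmod (p - q))^2"
    by (rule weighted_sq_dist_decomposition)
  then show ?thesis using assms by (simp add: norm_minus_commute algebra_simps)
qed

lemma norm_le_1_on_chord: "z \<in> closed_segment a b \<Longrightarrow> cmod a \<le> 1 \<Longrightarrow> cmod b \<le> 1 \<Longrightarrow> cmod z \<le> 1"
  using norm_le_max_on_segment[of z a b 0] by auto

lemma endpoint_if_on_circle_and_chord:
  fixes a b z :: complex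
  assumes "cmod a = 1" "cmod b = 1" "z \<in> closed_segment a b" "cmod z = 1"
  shows "z = a \<or> z = b"
proof -
  obtain u where u: "0 \<le> u" "u \<le> 1" "z = (1 - u) *\<^sub>R a + u *\<^sub>R b" using assms(3) by (auto simp: in_segment)
  have "1 = 1 + u*(u-1) * (cmod (b - a))^2" using norm_sq_chord_point[OF assms(1,2), of u] u(3) assms(4) by simp
  then have "u = 0 \<or> u = 1 \<or> b = a" by simp
  then show ?thesis using u(3) by auto
qed

text \<open>\<open>side p q z\<close> is a signed multiple of the distance from \<open>z\<close> to the line through
  \<open>p\<close> and \<open>q\<close>: two chords cross iff the endpoints of each lie strictly on opposite sides of
  the other, a condition stable under perturbation.\<close>

definition side :: "complex \<Rightarrow> complex \<Rightarrow> complex \<Rightarrow> real" where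
  "side p q z = Im ((z - p) * cnj (q - p))"

lemma side_affine: "side p q ((1 - s) *\<^sub>R x + s *\<^sub>R y) = (1 - s) * side p q x + s * side p q y"
proof -
  have "(1 - s) *\<^sub>R x + s *\<^sub>R y - p = (1 - s) *\<^sub>R (x - p) + s *\<^sub>R (y - p)"
    by (simp add: algebra_simps)
  then show ?thesis unfolding side_def by (simp add: scaleR_conv_of_real algebra_simps)
qed

lemma tendsto_side:
  assumes "pn \<longlonglongrightarrow> p" "qn \<longlonglongrightarrow> q" "zn \<longlonglongrightarrow> z"
  shows "(\<lambda>n. side (pn n) (qn n) (zn n)) \<longlonglongrightarrow> side p q z"
  unfolding side_def by (intro tendsto_intros assms)

lemma on_line_if_side_eq_0:
  fixes p q z :: complex
  assumes "p \<noteq> q" "side p q z = 0"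
  shows "\<exists>s. z = (1 - s) *\<^sub>R p + s *\<^sub>R q"
proof -
  define w where "w = q - p"
  have w0: "w \<noteq> 0" using assms(1) by (simp add: w_def)
  define R where "R = Re ((z - p) * cnj w)"
  have e1: "(z - p) * cnj w = of_real R"
    using assms(2) unfolding side_def R_def w_def by (simp add: complex_eq_iff)
  have "(z - p) * (cnj w * w) = of_real R * w" using e1 by (metis mult.assoc)
  moreover have "cnj w * w = of_real ((cmod w)^2)" by (metis complex_norm_square mult.commute)
  ultimately have "(z - p) * of_real ((cmod w)^2) = of_real R * w" by simp
  moreover have "(cmod w)^2 \<noteq> 0" using w0 by simp
  ultimately have "z - p = of_real (R / (cmod w)^2) * w"
    by (simp add: field_simps)
  then have "z = p + of_real (R / (cmod w)^2) * (q - p)" unfolding w_def by (simp add: algebra_simps)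
  moreover have "p + of_real c * (q - p) = (1 - c) *\<^sub>R p + c *\<^sub>R q" for c
    unfolding scaleR_conv_of_real by (simp add: algebra_simps)
  ultimately show ?thesis by metis
qed

lemma in_chord_if_side_eq_0:
  fixes p q z :: complex
  assumes "cmod p = 1" "cmod q = 1" "p \<noteq> q" "side p q z = 0" "cmod z \<le> 1"
  shows "z \<in> closed_segment p q"
proof -
  obtain s where s: "z = (1 - s) *\<^sub>R p + s *\<^sub>R q" using on_line_if_side_eq_0[OF assms(3,4)] by blast
  have "(cmod z)^2 = 1 + s*(s-1) * (cmod (q - p))^2" using norm_sq_chord_point[OF assms(1,2)] s by simp
  moreover have "(cmod z)^2 \<le> 1" using assms(5) by (simp add: power_le_one)
  moreover have "(cmod (q - p))^2 > 0" using assms(3) by simp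
  ultimately have "s*(s-1) * (cmod (q - p))^2 \<le> 0" by linarith
  then have "s*(s-1) \<le> 0" using \<open>(cmod (q - p))^2 > 0\<close> by (simp add: mult_le_0_iff)
  then have "0 \<le> s \<and> s \<le> 1"
    by (auto simp: mult_le_0_iff)
  then show ?thesis using s by (auto simp: in_segment)
qed

lemma endpoint_if_side_eq_0:
  fixes p q a :: complex
  assumes "cmod p = 1" "cmod q = 1" "p \<noteq> q" "side p q a = 0" "cmod a = 1"
  shows "a = p \<or> a = q"
proof -
  obtain s where s: "a = (1 - s) *\<^sub>R p + s *\<^sub>R q" using on_line_if_side_eq_0[OF assms(3,4)] by blast
  have "(cmod a)^2 = 1 + s*(s-1) * (cmod (q - p))^2" using norm_sq_chord_point[OF assms(1,2)] s by simp
  then have "s*(s-1) * (cmod (q - p))^2 = 0" using assms(5) by simp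
  then have "s = 0 \<or> s = 1" using assms(3) by simp
  then show ?thesis using s by auto
qed

lemma side_eq_0_on_segment:
  assumes "m \<in> closed_segment p q"
  shows "side p q m = 0"
proof -
  obtain s where s: "m = (1 - s) *\<^sub>R p + s *\<^sub>R q" using assms by (auto simp: in_segment)
  have "side p q m = (1-s) * side p q p + s * side p q q" using side_affine s by simp
  moreover have "side p q p = 0" "side p q q = 0" unfolding side_def
    by (simp_all add: complex_mult_cnj algebra_simps)
  ultimately show ?thesis by simp
qed

text \<open>The point where the line through \<open>a\<close> and \<open>b\<close> meets the line through \<open>p\<close> and
  \<open>q\<close>, located by linear interpolation of \<open>side p q\<close> between \<open>a\<close> and \<open>b\<close>.\<close>

definition crossing_point :: "complex \<Rightarrow> complex \<Rightarrow> complex \<Rightarrow> complex \<Rightarrow> complex" where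
  "crossing_point p q a b =
    (let s = side p q a / (side p q a - side p q b) in (1 - s) *\<^sub>R a + s *\<^sub>R b)"

lemma side_crossing_point:
  assumes "side p q a \<noteq> side p q b"
  shows "side p q (crossing_point p q a b) = 0"
  using assms unfolding crossing_point_def Let_def side_affine by (simp add: field_simps)

lemma crossing_point_in_chords:
  assumes "cmod p = 1" "cmod q = 1" "side p q a * side p q b < 0" "cmod (crossing_point p q a b) \<le> 1"
  shows "crossing_point p q a b \<in> closed_segment a b \<inter> closed_segment p q"
proof
  define s where "s = side p q a / (side p q a - side p q b)"
  have "0 \<le> s \<and> s \<le> 1"
    using assms(3) unfolding s_def
    by (cases "side p q a > 0")
      (auto simp: mult_less_0_iff divide_le_eq_1 divide_nonneg_nonpos divide_nonpos_neg)
  then show "crossing_point p q a b \<in> closed_segment a b"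
    unfolding crossing_point_def Let_def s_def[symmetric] by (auto simp: in_segment)
  have "p \<noteq> q" using assms(3) by (auto simp: side_def)
  moreover have "side p q (crossing_point p q a b) = 0"
    using assms(3) by (intro side_crossing_point) auto
  ultimately show "crossing_point p q a b \<in> closed_segment p q"
    using in_chord_if_side_eq_0[OF assms(1,2)] assms(4) by blast
qed

lemma crossing_side_sign:
  fixes a b p q m :: complex
  assumes "cmod a = 1" "cmod b = 1" "cmod p = 1" "cmod q = 1"
    "m \<in> closed_segment a b" "m \<in> closed_segment p q" "cmod m < 1" "{a, b} \<noteq> {p, q}"
  shows "side p q a * side p q b < 0" "m = crossing_point p q a b"
proof -
  have pq: "p \<noteq> q" using assms(3,6,7) by auto
  obtain t where t: "0 \<le> t" "t \<le> 1" "m = (1 - t) *\<^sub>R a + t *\<^sub>R b"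
    using assms(5) by (auto simp: in_segment)
  have t0: "t \<noteq> 0" using t assms(1,7) by auto
  have t1: "t \<noteq> 1" using t assms(2,7) by auto
  have ab: "a \<noteq> b" using t assms(1,7) by auto
  have z: "(1 - t) * side p q a + t * side p q b = 0"
    using side_eq_0_on_segment[OF assms(6)] side_affine[of p q t a b] t(3) by simp
  have nz: "side p q a \<noteq> 0"
  proof
    assume A: "side p q a = 0"
    then have B: "side p q b = 0" using z t t0 by simp
    have "a = p \<or> a = q" using endpoint_if_side_eq_0[OF assms(3,4) pq A assms(1)] .
    moreover have "b = p \<or> b = q" using endpoint_if_side_eq_0[OF assms(3,4) pq B assms(2)] .
    ultimately show False using ab assms(8) by auto
  qed
  have "t * (side p q a * side p q b) = -((1 - t) * (side p q a)\<^sup>2)"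
    using arg_cong[OF z, of "\<lambda>x. side p q a * x"] by (simp add: power2_eq_square algebra_simps)
  moreover have "(1 - t) * (side p q a)\<^sup>2 > 0" using nz t t1 by simp
  ultimately show "side p q a * side p q b < 0" using t(1) by (smt (verit) mult_nonneg_nonneg)
  have "side p q a - side p q b = side p q a / t"
    using z t0 by (simp add: field_simps)
  then have "side p q a / (side p q a - side p q b) = t" using nz t0 by simp
  then show "m = crossing_point p q a b"
    using t(3) by (simp add: crossing_point_def)
qed

lemma tendsto_crossing_point:
  assumes "pn \<longlonglongrightarrow> p" "qn \<longlonglongrightarrow> q" "an \<longlonglongrightarrow> a" "bn \<longlonglongrightarrow> b" "side p q a \<noteq> side p q b"
  shows "(\<lambda>n. crossing_point (pn n) (qn n) (an n) (bn n)) \<longlonglongrightarrow> crossing_point p q a b"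
  unfolding crossing_point_def Let_def
  using assms by (intro tendsto_intros tendsto_side) auto

lemma crossing_eventually:
  fixes a b p q m :: complex and an bn pn qn :: "nat \<Rightarrow> complex"
  assumes "cmod a = 1" "cmod b = 1" "cmod p = 1" "cmod q = 1"
    "m \<in> closed_segment a b" "m \<in> closed_segment p q" "cmod m < 1" "{a, b} \<noteq> {p, q}"
    "an \<longlonglongrightarrow> a" "bn \<longlonglongrightarrow> b" "pn \<longlonglongrightarrow> p" "qn \<longlonglongrightarrow> q"
    "\<And>n. cmod (pn n) = 1" "\<And>n. cmod (qn n) = 1"
  shows "\<forall>\<^sub>F n in sequentially. closed_segment (an n) (bn n) \<inter> closed_segment (pn n) (qn n) \<inter> ball 0 1 \<noteq> {}"
proof -
  note sign = crossing_side_sign[OF assms(1-8)]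
  have "(\<lambda>n. side (pn n) (qn n) (an n) * side (pn n) (qn n) (bn n)) \<longlonglongrightarrow> side p q a * side p q b"
    by (intro tendsto_intros tendsto_side assms)
  then have sides: "\<forall>\<^sub>F n in sequentially. side (pn n) (qn n) (an n) * side (pn n) (qn n) (bn n) < 0"
    using order_tendstoD(2) sign(1) by blast
  have "(\<lambda>n. crossing_point (pn n) (qn n) (an n) (bn n)) \<longlonglongrightarrow> m"
    using tendsto_crossing_point[OF assms(11,12,9,10)] sign by (metis not_square_less_zero)
  then have "(\<lambda>n. cmod (crossing_point (pn n) (qn n) (an n) (bn n))) \<longlonglongrightarrow> cmod m"
    by (rule tendsto_norm)
  then have inside: "\<forall>\<^sub>F n in sequentially. cmod (crossing_point (pn n) (qn n) (an n) (bn n)) < 1"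
    using order_tendstoD(2) assms(7) by blast
  show ?thesis
    using eventually_conj[OF sides inside]
  proof (rule eventually_mono)
    fix n
    assume "side (pn n) (qn n) (an n) * side (pn n) (qn n) (bn n) < 0 \<and>
      cmod (crossing_point (pn n) (qn n) (an n) (bn n)) < 1"
    then show "closed_segment (an n) (bn n) \<inter> closed_segment (pn n) (qn n) \<inter> ball 0 1 \<noteq> {}"
      using crossing_point_in_chords[OF assms(13,14), where a = "an n" and b = "bn n"] by fastforce
  qed
qed

lemma midpoint_in_open_disk: 
  fixes a b :: complex
  assumes "cmod a = 1" "cmod b = 1" "a \<noteq> b"
  shows "(1 - 1/2) *\<^sub>R a + (1/2) *\<^sub>R b \<in> closed_segment a b"
        "cmod ((1 - 1/2) *\<^sub>R a + (1/2) *\<^sub>R b) < 1"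
proof -
  show "(1 - 1/2) *\<^sub>R a + (1/2) *\<^sub>R b \<in> closed_segment a b"
    by (auto simp: in_segment intro!: exI[of _ "1/2"])
  have "(cmod ((1 - 1/2) *\<^sub>R a + (1/2) *\<^sub>R b))^2 = 1 + (1/2)*(1/2-1) * (cmod (b - a))^2"
    by (rule norm_sq_chord_point[OF assms(1,2)])
  moreover have "(cmod (b - a))^2 > 0" using assms(3) by simp
  ultimately have "(cmod ((1 - 1/2) *\<^sub>R a + (1/2) *\<^sub>R b))^2 < 1" by simp
  then show "cmod ((1 - 1/2) *\<^sub>R a + (1/2) *\<^sub>R b) < 1"
    by (simp add: power_less_one_iff abs_square_less_1)
qed

text \<open>The midpoint of the limit chord lies on some leaf \<open>l'\<close>, as the union of the leaves is
  closed; if \<open>l'\<close> were not the limit chord, the approximating leaves would eventually cross it.\<close>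

lemma lamination_limit_leaf:
  fixes l :: "nat \<Rightarrow> complex set"
  assumes L: "lamination L" and ln: "\<And>n. l n \<in> L" and conv: "(\<lambda>n. chord_dist (l n) {a,b}) \<longlonglongrightarrow> 0"
    and ab: "cmod a = 1" "cmod b = 1"
  shows "{a,b} \<in> L"
proof (cases "a = b")
  case True then show ?thesis using lamination_point_leaf[OF L ab(1)] by simp
next
  case False
  obtain an bn where an: "\<And>n. l n = {an n, bn n}" "\<And>n. cmod (an n) = 1" "\<And>n. cmod (bn n) = 1"
    "an \<longlonglongrightarrow> a" "bn \<longlonglongrightarrow> b"
    using chord_endpoints_converge[of l a b] lamination_chord[OF L ln] conv by metis
  define m where "m = (1 - 1/2) *\<^sub>R a + (1/2) *\<^sub>R b"
  have m: "m \<in> closed_segment a b" "cmod m < 1" unfolding m_def using midpoint_in_open_disk[OF ab False] by auto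
  define mn where "mn n = (1 - 1/2) *\<^sub>R an n + (1/2) *\<^sub>R bn n" for n
  have "mn \<longlonglongrightarrow> m" unfolding mn_def m_def by (intro tendsto_intros an)
  moreover have "mn n \<in> (\<Union>l\<in>L. geom l)" for n
  proof -
    have "mn n \<in> closed_segment (an n) (bn n)" unfolding mn_def in_segment
      by (rule exI[of _ "1/2"]) simp
    then have "mn n \<in> geom (l n)" using an(1)[of n] by (simp add: geom_pair)
    then show ?thesis using ln[of n] by blast
  qed
  ultimately have "m \<in> (\<Union>l\<in>L. geom l)" using closed_sequentially[OF lamination_closed[OF L]] by blast
  then obtain l' where l': "l' \<in> L" "m \<in> geom l'" by auto
  obtain p q where pq: "cmod p = 1" "cmod q = 1" "l' = {p,q}" using lamination_chord[OF L l'(1)] by (rule is_chordE)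
  show ?thesis
  proof (cases "{a,b} = {p,q}")
    case True then show ?thesis using l' pq by simp
  next
    case ne: False
    have ev1: "eventually (\<lambda>n. closed_segment (an n) (bn n) \<inter> closed_segment ((\<lambda>_. p) n) ((\<lambda>_. q) n) \<inter> ball 0 1 \<noteq> {}) sequentially"
      using l'(2) pq by (intro crossing_eventually[OF ab pq(1,2) m(1) _ m(2) ne an(4,5)]) (auto simp: geom_pair)
    have "chord_dist {p,q} {a,b} > 0" using chord_dist_pos ne by (simp add: chord_dist_commute)
    then have ev2: "eventually (\<lambda>n. chord_dist (l n) {a,b} < chord_dist {p,q} {a,b}) sequentially"
      using order_tendstoD(2)[OF conv] by blast
    have "eventually (\<lambda>n. False) sequentially"
    proof (rule eventually_mono[OF eventually_conj[OF ev1 ev2]])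
      fix n assume H: "closed_segment (an n) (bn n) \<inter> closed_segment ((\<lambda>_. p) n) ((\<lambda>_. q) n) \<inter> ball 0 1 \<noteq> {} \<and>
          chord_dist (l n) {a,b} < chord_dist {p,q} {a,b}"
      then have "l n \<noteq> l'" using pq by auto
      then have "cross (l n) l'" using H pq an(1)[of n] unfolding cross_def by (simp add: geom_pair)
      then show False using lamination_no_cross[OF L ln[of n] l'(1)] by simp
    qed
    then show ?thesis by simp
  qed
qed

text \<open>Distinct points of the circle with equal \<open>d\<close>-th powers are uniformly apart, so near a
  collision of \<open>u\<close> and \<open>w\<close> the equality of the \<open>d\<close>-th power sets must pair \<open>u\<close> with \<open>y\<close>
  and \<open>v\<close> with \<open>w\<close>.\<close>

lemma power_eq_if_endpoints_collide:
  fixes u v w y :: "nat \<Rightarrow> complex"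
  assumes d: "d > 0" and conv: "u \<longlonglongrightarrow> u0" "v \<longlonglongrightarrow> v0" "w \<longlonglongrightarrow> w0"
    and unit: "\<And>n. cmod (u n) = 1" "\<And>n. cmod (w n) = 1"
    and eq: "u0 = w0" and ne: "\<And>n. u n \<noteq> w n"
    and sig: "\<And>n. {u n ^ d, v n ^ d} = {w n ^ d, y n ^ d}"
  shows "u0 ^ d = v0 ^ d"
proof -
  obtain \<delta> where \<delta>: "\<delta> > 0" "\<And>z w. cmod z = 1 \<Longrightarrow> cmod w = 1 \<Longrightarrow> z^d = w^d \<Longrightarrow> z \<noteq> w \<Longrightarrow> cmod (z - w) \<ge> \<delta>"
    using roots_of_unity_separated[OF d] by metis
  have "(\<lambda>n. u n - w n) \<longlonglongrightarrow> u0 - w0" by (intro tendsto_intros conv)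
  then have "(\<lambda>n. cmod (u n - w n)) \<longlonglongrightarrow> 0" using eq by (simp add: tendsto_norm_zero)
  then have ev: "eventually (\<lambda>n. cmod (u n - w n) < \<delta>) sequentially"
    using order_tendstoD(2) \<delta>(1) by blast
  have EV: "eventually (\<lambda>n. v n ^ d = w n ^ d) sequentially"
  proof (rule eventually_mono[OF ev])
    fix n assume "cmod (u n - w n) < \<delta>"
    then have "u n ^ d \<noteq> w n ^ d" using \<delta>(2)[OF unit(1)[of n] unit(2)[of n] _ ne[of n]] by force
    then show "v n ^ d = w n ^ d" using sig[of n] by (auto simp: doubleton_eq_iff)
  qed
  have VT: "(\<lambda>n. v n ^ d) \<longlonglongrightarrow> v0 ^ d" by (intro tendsto_intros conv)
  have "(\<lambda>n. w n ^ d) \<longlonglongrightarrow> v0 ^ d" by (rule Lim_transform_eventually[OF VT EV])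
  moreover have "(\<lambda>n. w n ^ d) \<longlonglongrightarrow> w0 ^ d" by (intro tendsto_intros conv)
  ultimately have "v0 ^ d = w0 ^ d" using tendsto_unique[OF trivial_limit_sequentially] by blast
  then show ?thesis using eq by simp
qed

lemma power_eq_if_limits_share_endpoint:
  fixes an bn pn qn :: "nat \<Rightarrow> complex"
  assumes d: "d > 0"
    and an: "an \<longlonglongrightarrow> a" "bn \<longlonglongrightarrow> b" "\<And>n. cmod (an n) = 1" "\<And>n. cmod (bn n) = 1"
    and pn: "pn \<longlonglongrightarrow> p" "qn \<longlonglongrightarrow> q" "\<And>n. cmod (pn n) = 1" "\<And>n. cmod (qn n) = 1"
    and ne: "\<And>n. an n \<noteq> pn n" "\<And>n. an n \<noteq> qn n" "\<And>n. bn n \<noteq> pn n" "\<And>n. bn n \<noteq> qn n"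
    and sg: "\<And>n. {an n ^ d, bn n ^ d} = {pn n ^ d, qn n ^ d}"
    and shared: "{a, b} \<inter> {p, q} \<noteq> {}"
  shows "a ^ d = b ^ d"
proof -
  have sg': "{bn n ^ d, an n ^ d} = {pn n ^ d, qn n ^ d}" "{an n ^ d, bn n ^ d} = {qn n ^ d, pn n ^ d}"
    "{bn n ^ d, an n ^ d} = {qn n ^ d, pn n ^ d}" for n
    using sg[of n] by (auto simp: insert_commute)
  from shared have "a = p \<or> a = q \<or> b = p \<or> b = q" by auto
  then show ?thesis
  proof (elim disjE)
    assume "a = p"
    then show ?thesis
      using power_eq_if_endpoints_collide[OF d an(1,2) pn(1) an(3) pn(3) _ ne(1) sg] by blast
  next
    assume "a = q"
    then show ?thesis
      using power_eq_if_endpoints_collide[OF d an(1,2) pn(2) an(3) pn(4) _ ne(2) sg'(2)] by blast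
  next
    assume "b = p"
    then show ?thesis
      using power_eq_if_endpoints_collide[OF d an(2,1) pn(1) an(4) pn(3) _ ne(3) sg'(1)] by simp
  next
    assume "b = q"
    then show ?thesis
      using power_eq_if_endpoints_collide[OF d an(2,1) pn(2) an(4) pn(4) _ ne(4) sg'(3)] by simp
  qed
qed

lemma norm_lt_1_if_chords_meet:
  assumes "cmod a = 1" "cmod b = 1" "cmod p = 1" "cmod q = 1" "{a, b} \<inter> {p, q} = {}"
    and "z \<in> closed_segment a b" "z \<in> closed_segment p q"
  shows "cmod z < 1"
proof -
  have "cmod z \<noteq> 1"
  proof
    assume "cmod z = 1"
    then have "z \<in> {a, b}" "z \<in> {p, q}" using endpoint_if_on_circle_and_chord assms by blast+
    then show False using assms(5) by auto
  qed
  then show ?thesis using norm_le_1_on_chord[OF assms(6)] assms(1,2) by simp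
qed

lemma disjoint_chords_limit:
  fixes x y :: "nat \<Rightarrow> complex set"
  assumes d: "d > 0"
    and ch: "\<And>n. is_chord (x n)" "\<And>n. is_chord (y n)"
    and disj: "\<And>n. geom (x n) \<inter> geom (y n) = {}"
    and sig: "\<And>n. sigma_img d (x n) = sigma_img d (y n)"
    and cx: "(\<lambda>n. chord_dist (x n) {a, b}) \<longlonglongrightarrow> 0" and cy: "(\<lambda>n. chord_dist (y n) {p, q}) \<longlonglongrightarrow> 0"
    and unit: "cmod a = 1" "cmod b = 1" "cmod p = 1" "cmod q = 1"
    and nc: "a ^ d \<noteq> b ^ d"
  shows "geom {a, b} \<inter> geom {p, q} = {}"
proof (rule ccontr)
  assume "geom {a, b} \<inter> geom {p, q} \<noteq> {}"
  then obtain z where z: "z \<in> closed_segment a b" "z \<in> closed_segment p q" by (auto simp: geom_pair)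
  obtain an bn where an: "\<And>n. x n = {an n, bn n}" "\<And>n. cmod (an n) = 1" "\<And>n. cmod (bn n) = 1"
    "an \<longlonglongrightarrow> a" "bn \<longlonglongrightarrow> b"
    using chord_endpoints_converge[of x a b] ch cx by metis
  obtain pn qn where pn: "\<And>n. y n = {pn n, qn n}" "\<And>n. cmod (pn n) = 1" "\<And>n. cmod (qn n) = 1"
    "pn \<longlonglongrightarrow> p" "qn \<longlonglongrightarrow> q"
    using chord_endpoints_converge[of y p q] ch cy by metis
  have "u \<noteq> w" if "u \<in> x n" "w \<in> y n" for u w n
    using that disj[of n] hull_inc[of u "x n" convex] hull_inc[of w "y n" convex]
    unfolding geom_def by auto
  then have ne: "\<And>n. an n \<noteq> pn n" "\<And>n. an n \<noteq> qn n" "\<And>n. bn n \<noteq> pn n" "\<And>n. bn n \<noteq> qn n"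
    using an(1) pn(1) by blast+
  show False
  proof (cases "{a, b} \<inter> {p, q} = {}")
    case False
    have "{an n ^ d, bn n ^ d} = {pn n ^ d, qn n ^ d}" for n
      using sig[of n] an(1) pn(1) by (simp add: sigma_img_pair)
    then show False
      using power_eq_if_limits_share_endpoint[OF d an(4,5,2,3) pn(4,5,2,3) ne] False nc by blast
  next
    case True
    then have "\<forall>\<^sub>F n in sequentially. closed_segment (an n) (bn n) \<inter> closed_segment (pn n) (qn n) \<inter> ball 0 1 \<noteq> {}"
      using norm_lt_1_if_chords_meet[OF unit True z] unit z
      by (intro crossing_eventually[OF unit z _ _ an(4,5) pn(4,5) pn(2,3)]) auto
    moreover have "closed_segment (an n) (bn n) \<inter> closed_segment (pn n) (qn n) = {}" for n
      using disj[of n] an(1) pn(1) by (simp add: geom_pair)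
    ultimately show False by simp
  qed
qed

lemma uncountable_circle_arc:
  fixes a :: complex
  assumes "cmod a = 1" "e > 0"
  shows "uncountable {b. cmod b = 1 \<and> cmod (b - a) < e}"
proof -
  have ic: "isCont cis 0"
    using continuous_on_cis[OF continuous_on_id, of UNIV] by (simp add: continuous_on_eq_continuous_at)
  obtain \<delta> where \<delta>: "\<delta> > 0" "\<And>x. dist x 0 < \<delta> \<Longrightarrow> dist (cis x) (cis 0) < e"
    using ic assms(2) unfolding continuous_at_eps_delta by metis
  define \<delta>' where "\<delta>' = min \<delta> pi"
  have \<delta>': "\<delta>' > 0" "\<delta>' \<le> pi" "\<delta>' \<le> \<delta>" using \<delta>(1) pi_gt_zero by (auto simp: \<delta>'_def)
  have inj: "inj_on (\<lambda>t. a * cis t) {0<..<\<delta>'}"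
  proof (rule inj_onI)
    fix s t assume st: "s \<in> {0<..<\<delta>'}" "t \<in> {0<..<\<delta>'}" "a * cis s = a * cis t"
    then have "cis s = cis t" using assms(1) by auto
    then have "Arg (cis s) = Arg (cis t)" by simp
    then show "s = t" using st \<delta>' by (simp add: Arg_cis)
  qed
  have sub: "(\<lambda>t. a * cis t) ` {0<..<\<delta>'} \<subseteq> {b. cmod b = 1 \<and> cmod (b - a) < e}"
  proof
    fix b assume "b \<in> (\<lambda>t. a * cis t) ` {0<..<\<delta>'}"
    then obtain t where t: "t \<in> {0<..<\<delta>'}" "b = a * cis t" by auto
    have "dist (cis t) (cis 0) < e" using \<delta>(2)[of t] t \<delta>' by auto
    then have "cmod (cis t - 1) < e" by (simp add: dist_norm)
    moreover have "b - a = a * (cis t - 1)" using t by (simp add: algebra_simps)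
    ultimately show "b \<in> {b. cmod b = 1 \<and> cmod (b - a) < e}"
      using t assms(1) by (simp add: norm_mult)
  qed
  have "uncountable ((\<lambda>t. a * cis t) ` {0<..<\<delta>'})"
    using countable_image_inj_on[OF _ inj] uncountable_open_interval \<delta>' by auto
  then show ?thesis using sub countable_subset by blast
qed

section \<open>Sibling families\<close>

definition sibling_family :: "nat \<Rightarrow> complex set set \<Rightarrow> complex set \<Rightarrow> (nat \<Rightarrow> complex set) \<Rightarrow> bool" where
  "sibling_family d L l f \<longleftrightarrow> f 0 = l \<and> (\<forall>i<d. f i \<in> L) \<and>
     (\<forall>i<d. \<forall>j<d. i \<noteq> j \<longrightarrow> geom (f i) \<inter> geom (f j) = {}) \<and>
     (\<forall>i<d. sigma_img d (f i) = sigma_img d l)"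

lemma sibling_invariant_iff:
  "sibling_invariant d L \<longleftrightarrow> lamination L \<and> (\<forall>l\<in>L. sigma_img d l \<in> L) \<and>
     (\<forall>l\<in>L. \<exists>l'\<in>L. sigma_img d l' = l) \<and>
     (\<forall>l\<in>L. \<not> critical d l \<longrightarrow> (\<exists>f. sibling_family d L l f))"
  unfolding sibling_invariant_def sibling_family_def ..

lemma lamination_limit_chord:
  fixes l :: "nat \<Rightarrow> complex set"
  assumes "lamination L" "\<And>n. l n \<in> L" "is_chord k" "(\<lambda>n. chord_dist (l n) k) \<longlonglongrightarrow> 0"
  shows "k \<in> L"
proof -
  obtain a b where "cmod a = 1" "cmod b = 1" "k = {a, b}"
    using assms(3) by (rule is_chordE)
  then show ?thesis using lamination_limit_leaf[OF assms(1,2), where a = a and b = b] assms(4) by simp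
qed

lemma point_leaf_sibling_family:
  assumes "d > 0" "lamination L" "cmod a = 1"
  shows "\<exists>f. sibling_family d L {a} f"
proof -
  define c where "c i = cis (2 * pi * real i / real d)" for i
  have bij: "bij_betw c {..<d} {z. z ^ d = 1}"
    unfolding c_def by (rule Complex.bij_betw_roots_unity[OF assms(1)])
  have "cmod (c i) = 1" for i by (simp add: c_def)
  then have "\<forall>i<d. {a * c i} \<in> L"
    using assms(2,3) lamination_point_leaf by (simp add: norm_mult)
  moreover have "geom {a * c i} \<inter> geom {a * c j} = {}" if "i < d" "j < d" "i \<noteq> j" for i j
    using bij_betw_imp_inj_on[OF bij] that assms(3) by (auto simp: geom_singleton inj_on_def)
  moreover have "sigma_img d {a * c i} = sigma_img d {a}" if "i < d" for i
    using bij that unfolding sigma_img_def bij_betw_def by (auto simp: power_mult_distrib)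
  ultimately have "sibling_family d L {a} (\<lambda>i. {a * c i})"
    unfolding sibling_family_def by (simp add: c_def)
  then show ?thesis by blast
qed

lemma near_fibre_if_sibling_near:
  assumes "d > 0" "is_chord l" "r > 0"
  obtains \<delta> where "\<delta> > 0" "\<And>m x. is_chord m \<Longrightarrow> is_chord x \<Longrightarrow> chord_dist m l < \<delta> \<Longrightarrow>
      sigma_img d x = sigma_img d m \<Longrightarrow>
      \<exists>k. is_chord k \<and> sigma_img d k = sigma_img d l \<and> chord_dist x k < r"
proof -
  obtain \<delta> where \<delta>: "\<delta> > 0" "\<And>x. is_chord x \<Longrightarrow> chord_dist (sigma_img d x) (sigma_img d l) < \<delta> \<Longrightarrow>
      \<exists>k. is_chord k \<and> sigma_img d k = sigma_img d l \<and> chord_dist x k < r"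
    using near_fibre_if_image_near[OF is_chord_sigma_img[OF assms(2)] assms(3), where d = d]
    by blast
  show ?thesis
  proof (rule that[of "\<delta> / d"])
    fix m x assume m: "is_chord m" "is_chord x" "chord_dist m l < \<delta> / d"
      and x: "sigma_img d x = sigma_img d m"
    have "chord_dist (sigma_img d x) (sigma_img d l) \<le> d * chord_dist m l"
      using chord_dist_sigma_img_le[OF m(1) assms(2)] x by simp
    also have "\<dots> < \<delta>"
      using m(3) assms(1) by (simp add: field_simps)
    finally show "\<exists>k. is_chord k \<and> sigma_img d k = sigma_img d l \<and> chord_dist x k < r"
      using \<delta>(2) m(2) by blast
  qed (use \<delta> assms in simp)
qed

lemma chord_limit_unique:
  fixes x :: "nat \<Rightarrow> complex set"
  assumes "is_chord k" "is_chord k'"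
    and "(\<lambda>n. chord_dist (x n) k) \<longlonglongrightarrow> 0" "(\<lambda>n. chord_dist (x n) k') \<longlonglongrightarrow> 0"
  shows "k = k'"
proof -
  have "chord_dist k k' \<le> chord_dist (x n) k + chord_dist (x n) k'" for n
    using chord_dist_triangle[of k k' "x n"] by (simp add: chord_dist_commute[of k])
  then have "chord_dist k k' \<le> 0"
    by (intro LIMSEQ_le_const[OF tendsto_add_zero[OF assms(3,4)]]) auto
  then have "chord_dist k k' = 0" using chord_dist_nonneg[of k k'] by linarith
  moreover obtain a b c e where "k = {a, b}" "k' = {c, e}"
    using assms(1,2) by (meson is_chordE)
  ultimately show ?thesis using chord_dist_eq_0 by blast
qed

lemma sigma_img_eq_of_limits:
  fixes x m :: "nat \<Rightarrow> complex set"
  assumes x: "\<And>n. is_chord (x n)" "\<And>n. sigma_img d (x n) = sigma_img d (m n)"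
    and m: "\<And>n. is_chord (m n)" and "is_chord k" "is_chord l"
    and lim: "(\<lambda>n. chord_dist (x n) k) \<longlonglongrightarrow> 0" "(\<lambda>n. chord_dist (m n) l) \<longlonglongrightarrow> 0"
  shows "sigma_img d k = sigma_img d l"
proof (rule sigma_img_eq_if_limit[OF x(1) assms(4) is_chord_sigma_img[OF assms(5)] lim(1)])
  have "chord_dist (sigma_img d (x n)) (sigma_img d l) \<le> d * chord_dist (m n) l" for n
    using chord_dist_sigma_img_le[OF m assms(5), where d = d] by (simp add: x(2))
  then have "\<forall>n. norm (chord_dist (sigma_img d (x n)) (sigma_img d l)) \<le> d * chord_dist (m n) l"
    by (simp add: chord_dist_nonneg)
  moreover have "(\<lambda>n. d * chord_dist (m n) l) \<longlonglongrightarrow> 0"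
    using tendsto_mult[OF tendsto_const lim(2), of "real d"] by simp
  ultimately show "(\<lambda>n. chord_dist (sigma_img d (x n)) (sigma_img d l)) \<longlonglongrightarrow> 0"
    by (rule Lim_null_comparison[OF always_eventually])
qed

lemma sibling_family_limit:
  fixes m :: "nat \<Rightarrow> complex set" and f :: "nat \<Rightarrow> nat \<Rightarrow> complex set"
  assumes d: "d > 0" and L: "lamination L"
    and l: "l = {a, b}" "cmod a = 1" "cmod b = 1" "a ^ d \<noteq> b ^ d"
    and fam: "\<And>n. sibling_family d L (m n) (f n)"
    and m: "(\<lambda>n. chord_dist (m n) l) \<longlonglongrightarrow> 0"
    and \<tau>: "\<And>i. i < d \<Longrightarrow> is_chord (\<tau> i)" "\<And>i. i < d \<Longrightarrow> (\<lambda>n. chord_dist (f n i) (\<tau> i)) \<longlonglongrightarrow> 0"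
  shows "sibling_family d L l \<tau>"
proof -
  have f: "f n 0 = m n" "i < d \<Longrightarrow> f n i \<in> L" "i < d \<Longrightarrow> sigma_img d (f n i) = sigma_img d (m n)"
    "i < d \<Longrightarrow> j < d \<Longrightarrow> i \<noteq> j \<Longrightarrow> geom (f n i) \<inter> geom (f n j) = {}" for n i j
    using fam[of n] unfolding sibling_family_def by auto
  have chord_l: "is_chord l" using l by (simp add: is_chord_pair)
  have chord_f: "is_chord (f n i)" if "i < d" for n i
    using f(2)[OF that] lamination_chord[OF L] by blast
  have chord_m: "is_chord (m n)" for n
    using chord_f[OF d, of n] by (simp only: f(1))
  have img: "sigma_img d (\<tau> i) = sigma_img d l" if i: "i < d" for i
    using sigma_img_eq_of_limits[OF chord_f[OF i] f(3)[OF i] chord_m \<tau>(1)[OF i] chord_l \<tau>(2)[OF i] m] .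
  have rep: "\<exists>p q. \<tau> i = {p, q} \<and> cmod p = 1 \<and> cmod q = 1 \<and> p ^ d \<noteq> q ^ d" if i: "i < d" for i
  proof -
    obtain p q where pq: "cmod p = 1" "cmod q = 1" "\<tau> i = {p, q}"
      using \<tau>(1)[OF i] by (rule is_chordE)
    moreover have "{p ^ d, q ^ d} = {a ^ d, b ^ d}"
      using img[OF i] by (simp add: pq(3) l(1) sigma_img_pair)
    then have "p ^ d \<noteq> q ^ d" using l(4) by (auto simp: doubleton_eq_iff)
    ultimately show ?thesis by blast
  qed
  have "(\<lambda>n. chord_dist (m n) (\<tau> 0)) \<longlonglongrightarrow> 0"
    using \<tau>(2)[OF d] by (simp only: f(1))
  then have "\<tau> 0 = l" by (rule chord_limit_unique[OF \<tau>(1)[OF d] chord_l _ m])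
  moreover have "\<tau> i \<in> L" if "i < d" for i
    using lamination_limit_chord[OF L f(2)[OF that] \<tau>(1)[OF that] \<tau>(2)[OF that]] .
  moreover have "geom (\<tau> i) \<inter> geom (\<tau> j) = {}" if ij: "i < d" "j < d" "i \<noteq> j" for i j
  proof -
    obtain p q where pq: "\<tau> i = {p, q}" "cmod p = 1" "cmod q = 1" "p ^ d \<noteq> q ^ d"
      using rep[OF ij(1)] by blast
    obtain p' q' where pq': "\<tau> j = {p', q'}" "cmod p' = 1" "cmod q' = 1"
      using rep[OF ij(2)] by blast
    have "geom {p, q} \<inter> geom {p', q'} = {}"
    proof (rule disjoint_chords_limit[OF d])
      show "is_chord (f n i)" "is_chord (f n j)" for n
        using f(2) ij lamination_chord[OF L] by blast+
      show "geom (f n i) \<inter> geom (f n j) = {}" "sigma_img d (f n i) = sigma_img d (f n j)" for n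
        using f(3,4) ij by simp_all
      show "(\<lambda>n. chord_dist (f n i) {p, q}) \<longlonglongrightarrow> 0" "(\<lambda>n. chord_dist (f n j) {p', q'}) \<longlonglongrightarrow> 0"
        using \<tau>(2)[OF ij(1)] \<tau>(2)[OF ij(2)] by (simp_all only: pq(1) pq'(1))
    qed (use pq pq' in simp_all)
    then show ?thesis using pq(1) pq'(1) by simp
  qed
  ultimately show ?thesis using img unfolding sibling_family_def by simp
qed

lemma sibling_tuples_cover:
  assumes d: "d > 0" and L: "lamination L"
    and l: "l = {a, b}" "cmod a = 1" "cmod b = 1" "a ^ d \<noteq> b ^ d"
    and g: "\<And>m. m \<in> L \<Longrightarrow> \<not> critical d m \<Longrightarrow> sibling_family d L m (g m)"
    and e: "e > 0"
  obtains e' where "e' > 0"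
    "{m\<in>L. chord_dist m l < e'} \<subseteq>
      (\<Union>\<tau>\<in>(\<Pi>\<^sub>E i\<in>{..<d}. {k. is_chord k \<and> sigma_img d k = sigma_img d l}).
        {m\<in>L. chord_dist m l < e \<and> \<not> critical d m \<and> (\<forall>i<d. chord_dist (g m i) (\<tau> i) < e)})"
proof -
  have chord_l: "is_chord l" using l by (simp add: is_chord_pair)
  obtain \<delta> where \<delta>: "\<delta> > 0" "\<And>m x. is_chord m \<Longrightarrow> is_chord x \<Longrightarrow> chord_dist m l < \<delta> \<Longrightarrow>
      sigma_img d x = sigma_img d m \<Longrightarrow>
      \<exists>k. is_chord k \<and> sigma_img d k = sigma_img d l \<and> chord_dist x k < e"
    using near_fibre_if_sibling_near[OF d chord_l e] by blast
  define D where "D = cmod (a ^ d - b ^ d)"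
  define e' where "e' = min e (min \<delta> (D / (2 * d)))"
  have D: "D > 0" using l(4) by (simp add: D_def)
  show ?thesis
  proof (rule that[of e'])
    show "e' > 0" using e \<delta>(1) D d by (simp add: e'_def)
    show "{m\<in>L. chord_dist m l < e'} \<subseteq> (\<Union>\<tau>\<in>(\<Pi>\<^sub>E i\<in>{..<d}. {k. is_chord k \<and> sigma_img d k = sigma_img d l}).
        {m\<in>L. chord_dist m l < e \<and> \<not> critical d m \<and> (\<forall>i<d. chord_dist (g m i) (\<tau> i) < e)})"
    proof
      fix m assume "m \<in> {m\<in>L. chord_dist m l < e'}"
      then have m: "m \<in> L" "chord_dist m l < e'" by auto
      have "d * chord_dist m {a, b} < d * (D / (2 * d))"
        using m(2) d l(1) by (intro mult_strict_left_mono) (auto simp: e'_def)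
      then have nc: "\<not> critical d m"
        using not_critical_if_near[OF lamination_chord[OF L m(1)] l(2-4)] d by (simp add: D_def)
      have fam: "sibling_family d L m (g m)" by (rule g[OF m(1) nc])
      have "\<exists>k. is_chord k \<and> sigma_img d k = sigma_img d l \<and> chord_dist (g m i) k < e"
        if "i < d" for i
        using fam that m \<delta>(2)[OF lamination_chord[OF L m(1)] lamination_chord[OF L]]
        unfolding sibling_family_def by (simp add: e'_def)
      then obtain t where t: "\<And>i. i < d \<Longrightarrow> is_chord (t i) \<and>
          sigma_img d (t i) = sigma_img d l \<and> chord_dist (g m i) (t i) < e"
        by metis
      have "restrict t {..<d} \<in> (\<Pi>\<^sub>E i\<in>{..<d}. {k. is_chord k \<and> sigma_img d k = sigma_img d l})"
        using t by auto
      moreover have "chord_dist m l < e" using m(2) by (simp add: e'_def)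
      ultimately show "m \<in> (\<Union>\<tau>\<in>(\<Pi>\<^sub>E i\<in>{..<d}. {k. is_chord k \<and> sigma_img d k = sigma_img d l}).
          {m\<in>L. chord_dist m l < e \<and> \<not> critical d m \<and> (\<forall>i<d. chord_dist (g m i) (\<tau> i) < e)})"
        using m(1) nc t by (intro UN_I[of "restrict t {..<d}"]) auto
    qed
  qed
qed

lemma tendsto_0_if_lt_inverse_Suc:
  fixes X :: "nat \<Rightarrow> real"
  assumes "\<And>n. 0 \<le> X n" "\<And>n. X n < inverse (real (Suc n))"
  shows "X \<longlonglongrightarrow> 0"
  by (rule Lim_null_comparison[OF always_eventually LIMSEQ_inverse_real_of_nat])
    (use assms in \<open>auto intro: less_imp_le\<close>)

lemma finite_sigma_img_fibre_in_lamination: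
  assumes "d > 0" "lamination L" "S \<subseteq> L"
  shows "finite {x\<in>S. sigma_img d x = y}"
  by (rule finite_subset[OF _ finite_sigma_img_chord_fibre[OF assms(1), of y]])
    (use assms(2,3) lamination_chord in blast)

section \<open>Leaves with many nearby leaves\<close>

text \<open>The perfect part keeps the leaves near which there are uncountably many leaves, and a
  leaf is not isolated iff there are infinitely many leaves near it. Both notions of
  ``many'' satisfy the axioms of \<open>size_notion\<close>, which is all the constructions below use.\<close>

locale size_notion =
  fixes big :: "complex set set \<Rightarrow> bool"
  assumes big_mono: "big S \<Longrightarrow> S \<subseteq> T \<Longrightarrow> big T"
    and big_Un: "big (A \<union> B) \<Longrightarrow> big A \<or> big B"
    and not_big_empty: "\<not> big {}"
    and big_image: "big S \<Longrightarrow> (\<And>y. finite {x\<in>S. f x = y}) \<Longrightarrow> big (f ` S)"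
    and big_image_rev: "big (f ` S) \<Longrightarrow> big S"
    and uncountable_big: "uncountable S \<Longrightarrow> big S"
begin

definition big_part :: "complex set set \<Rightarrow> complex set set" where
  "big_part L = {l\<in>L. \<forall>e>0. big {l'\<in>L. chord_dist l' l < e}}"

lemma big_nonempty: "big S \<Longrightarrow> S \<noteq> {}"
  using not_big_empty by auto

lemma big_finite_Union: "finite F \<Longrightarrow> big (\<Union>F) \<Longrightarrow> \<exists>A\<in>F. big A"
proof (induction F rule: finite_induct)
  case (insert x F)
  then show ?case using big_Un[of x "\<Union>F"] by auto
qed (simp add: not_big_empty)

lemma big_for_some_index:
  fixes S :: "real \<Rightarrow> 'k \<Rightarrow> complex set set"
  assumes "finite K"
    and mono: "\<And>e e' k. 0 < e \<Longrightarrow> e \<le> e' \<Longrightarrow> S e k \<subseteq> S e' k"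
    and big: "\<And>e. e > 0 \<Longrightarrow> big (\<Union>k\<in>K. S e k)"
  shows "\<exists>k\<in>K. \<forall>e>0. big (S e k)"
proof (rule ccontr)
  assume "\<not> ?thesis"
  then obtain \<epsilon> where \<epsilon>: "\<And>k. k \<in> K \<Longrightarrow> \<epsilon> k > 0 \<and> \<not> big (S (\<epsilon> k) k)"
    by metis
  define e where "e = Min (insert 1 (\<epsilon> ` K))"
  have e: "e > 0" "\<And>k. k \<in> K \<Longrightarrow> e \<le> \<epsilon> k"
    using \<epsilon> assms(1) by (auto simp: e_def)
  obtain k where "k \<in> K" "big (S e k)"
    using big_finite_Union[of "(\<lambda>k. S e k) ` K"] assms(1) big[OF e(1)] by auto
  then show False using big_mono mono[OF e(1) e(2)] \<epsilon> by blast
qed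

lemma condensation:
  assumes "\<And>l. l \<in> S \<Longrightarrow> is_chord l" "big S"
  obtains a b where "cmod a = 1" "cmod b = 1" "\<And>e. e > 0 \<Longrightarrow> big {l\<in>S. chord_dist l {a, b} < e}"
proof (rule ccontr)
  let ?T = "sphere (0::complex) 1 \<times> sphere (0::complex) 1"
  assume "\<not> thesis"
  then have "\<forall>p\<in>?T. \<exists>e>0. \<not> big {l\<in>S. chord_dist l {fst p, snd p} < e}"
    using that by force
  then obtain \<epsilon> where \<epsilon>: "\<And>p. p \<in> ?T \<Longrightarrow> \<epsilon> p > 0 \<and> \<not> big {l\<in>S. chord_dist l {fst p, snd p} < \<epsilon> p}"
    by metis
  have "compact ?T" by (intro compact_Times compact_sphere)
  moreover have "?T \<subseteq> (\<Union>p\<in>?T. ball p (\<epsilon> p))" using \<epsilon> by force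
  ultimately obtain C where C: "C \<subseteq> ?T" "finite C" "?T \<subseteq> (\<Union>p\<in>C. ball p (\<epsilon> p))"
    using compactE_image[of ?T ?T "\<lambda>p. ball p (\<epsilon> p)"] by auto
  have "S \<subseteq> (\<Union>p\<in>C. {l\<in>S. chord_dist l {fst p, snd p} < \<epsilon> p})"
  proof
    fix l assume lS: "l \<in> S"
    obtain a b where ab: "cmod a = 1" "cmod b = 1" "l = {a, b}"
      using assms(1)[OF lS] by (rule is_chordE)
    then obtain p where p: "p \<in> C" "dist (a, b) p < \<epsilon> p"
      using C(3) by (force simp: dist_commute)
    have "cmod (a - fst p) \<le> dist (a, b) p" "cmod (b - snd p) \<le> dist (a, b) p"
      using dist_fst_le[of "(a, b)" p] dist_snd_le[of "(a, b)" p] by (simp_all add: dist_norm)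
    then have "chord_dist l {fst p, snd p} < \<epsilon> p"
      using p pair_dist_le_straight[of a b "fst p" "snd p"] by (simp add: ab(3) chord_dist_pair)
    then show "l \<in> (\<Union>p\<in>C. {l\<in>S. chord_dist l {fst p, snd p} < \<epsilon> p})" using lS p(1) by auto
  qed
  then obtain p where "p \<in> C" "big {l\<in>S. chord_dist l {fst p, snd p} < \<epsilon> p}"
    using big_finite_Union[of "(\<lambda>p. {l\<in>S. chord_dist l {fst p, snd p} < \<epsilon> p}) ` C"]
      C(2) big_mono[OF assms(2)] by auto
  then show False using \<epsilon> C(1) by blast
qed

lemma big_part_subset: "big_part L \<subseteq> L"
  unfolding big_part_def by auto

lemma big_near_big_part: "l \<in> big_part L \<Longrightarrow> e > 0 \<Longrightarrow> big {x\<in>L. chord_dist x l < e}"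
  unfolding big_part_def by auto

lemma mem_big_partI:
  assumes "lamination L" "is_chord k" "\<And>e. e > 0 \<Longrightarrow> big {x\<in>L. chord_dist x k < e}"
  shows "k \<in> big_part L"
proof -
  have "\<exists>x\<in>L. chord_dist x k < e" if "e > 0" for e
    using big_nonempty[OF assms(3)[OF that]] by blast
  then obtain x where "\<And>n. x n \<in> L" "(\<lambda>n. chord_dist (x n) k) \<longlonglongrightarrow> 0"
    using chord_dist_approx_seq[of L k] by blast
  then have "k \<in> L" using lamination_limit_chord[OF assms(1) _ assms(2)] by blast
  then show ?thesis using assms(3) by (simp add: big_part_def)
qed

lemma big_near_if_approx_by_big_part:
  assumes "\<And>e. e > 0 \<Longrightarrow> \<exists>l\<in>big_part L. chord_dist l k < e" "e > 0"
  shows "big {x\<in>L. chord_dist x k < e}"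
proof -
  obtain l where l: "l \<in> big_part L" "chord_dist l k < e / 2"
    using assms by (meson half_gt_zero)
  have "{x\<in>L. chord_dist x l < e / 2} \<subseteq> {x\<in>L. chord_dist x k < e}"
  proof
    fix x assume "x \<in> {x\<in>L. chord_dist x l < e / 2}"
    then show "x \<in> {x\<in>L. chord_dist x k < e}" using l(2) chord_dist_triangle[of x k l] by simp
  qed
  then show ?thesis
    using big_near_big_part[OF l(1)] assms(2) big_mono by (meson half_gt_zero)
qed

lemma point_leaf_mem_big_part:
  assumes "lamination L" "cmod a = 1"
  shows "{a} \<in> big_part L"
proof (rule mem_big_partI[OF assms(1)])
  show "is_chord {a}" using is_chord_pair[OF assms(2,2)] by simp
  fix e :: real assume "e > 0"
  have "uncountable ((\<lambda>b. {b}) ` {b. cmod b = 1 \<and> cmod (b - a) < e})"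
    using uncountable_circle_arc[OF assms(2) \<open>e > 0\<close>] countable_image_inj_on[of "\<lambda>b. {b}"]
    by (auto simp: inj_on_def)
  moreover have "(\<lambda>b. {b}) ` {b. cmod b = 1 \<and> cmod (b - a) < e} \<subseteq> {x\<in>L. chord_dist x {a} < e}"
    using lamination_point_leaf[OF assms(1)] by (auto simp: chord_dist_singleton)
  ultimately show "big {x\<in>L. chord_dist x {a} < e}"
    using uncountable_big big_mono by blast
qed

lemma closed_Union_big_part:
  assumes L: "lamination L"
  shows "closed (\<Union>l\<in>big_part L. geom l)"
  unfolding closed_sequential_limits
proof (intro allI impI, elim conjE)
  fix z :: "nat \<Rightarrow> complex" and z0
  assume "\<forall>n. z n \<in> (\<Union>l\<in>big_part L. geom l)" and z: "z \<longlonglongrightarrow> z0"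
  then have "\<forall>n. \<exists>l. l \<in> big_part L \<and> z n \<in> geom l" by blast
  then obtain l where l: "\<And>n. l n \<in> big_part L" "\<And>n. z n \<in> geom (l n)" by metis
  have chord_l: "\<And>n. is_chord (l n)" using l(1) big_part_subset lamination_chord[OF L] by blast
  obtain r a b where r: "strict_mono r" "cmod a = 1" "cmod b = 1"
    "(\<lambda>n. chord_dist (l (r n)) {a, b}) \<longlonglongrightarrow> 0"
    using chord_convergent_subseq[of l] chord_l by metis
  obtain an bn where ab: "\<And>n. l (r n) = {an n, bn n}" "an \<longlonglongrightarrow> a" "bn \<longlonglongrightarrow> b"
    using chord_endpoints_converge[of "\<lambda>n. l (r n)" a b] chord_l r(4) by metis
  have "\<exists>t\<in>{0..1}. z (r n) = (1 - t) *\<^sub>R an n + t *\<^sub>R bn n" for n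
    using l(2)[of "r n"] ab(1)[of n] by (auto simp: geom_pair in_segment)
  then obtain t where t: "\<And>n. t n \<in> {0..1}" "\<And>n. z (r n) = (1 - t n) *\<^sub>R an n + t n *\<^sub>R bn n"
    by metis
  obtain t0 r' where t0: "t0 \<in> {0..1}" "strict_mono (r' :: nat \<Rightarrow> nat)" "(t \<circ> r') \<longlonglongrightarrow> t0"
    using seq_compactE[OF compact_imp_seq_compact[OF compact_Icc[of 0 "1::real"]]] t(1) by metis
  have "(\<lambda>n. (1 - t (r' n)) *\<^sub>R an (r' n) + t (r' n) *\<^sub>R bn (r' n)) \<longlonglongrightarrow> (1 - t0) *\<^sub>R a + t0 *\<^sub>R b"
    using LIMSEQ_subseq_LIMSEQ[OF ab(2) t0(2)] LIMSEQ_subseq_LIMSEQ[OF ab(3) t0(2)] t0(3)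
    by (intro tendsto_intros) (auto simp: o_def)
  moreover have "(\<lambda>n. z (r (r' n))) \<longlonglongrightarrow> z0"
    using LIMSEQ_subseq_LIMSEQ[OF z strict_mono_o[OF r(1) t0(2)]] by (simp add: o_def)
  ultimately have "z0 = (1 - t0) *\<^sub>R a + t0 *\<^sub>R b"
    using tendsto_unique[OF trivial_limit_sequentially] t(2) by force
  then have "z0 \<in> geom {a, b}" using t0(1) by (auto simp: geom_pair in_segment)
  moreover have "\<exists>l'\<in>big_part L. chord_dist l' {a, b} < e" if e: "e > 0" for e
  proof -
    obtain N where "\<forall>n\<ge>N. chord_dist (l (r n)) {a, b} < e"
      using order_tendstoD(2)[OF r(4) e] unfolding eventually_sequentially by blast
    then show ?thesis using l(1) by blast
  qed
  then have "{a, b} \<in> big_part L"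
    by (intro mem_big_partI[OF L is_chord_pair[OF r(2,3)]] big_near_if_approx_by_big_part)
  ultimately show "z0 \<in> (\<Union>l\<in>big_part L. geom l)" by blast
qed

lemma lamination_big_part:
  assumes "lamination L"
  shows "lamination (big_part L)"
  unfolding lamination_def
proof (intro conjI)
  show "\<forall>l\<in>big_part L. is_chord l" "\<forall>l1\<in>big_part L. \<forall>l2\<in>big_part L. \<not> cross l1 l2"
    using big_part_subset lamination_chord[OF assms] lamination_no_cross[OF assms] by blast+
  show "\<forall>a\<in>unit_circle. {a} \<in> big_part L"
    using point_leaf_mem_big_part[OF assms] by (simp add: unit_circle_def)
qed (rule closed_Union_big_part[OF assms])

lemma big_part_image:
  assumes d: "d > 0" and SI: "sibling_invariant d L" and l: "l \<in> big_part L"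
  shows "sigma_img d l \<in> big_part L"
proof -
  have L: "lamination L" using SI by (rule sibling_invariant_lamination)
  have chord_l: "is_chord l" using l big_part_subset lamination_chord[OF L] by blast
  show ?thesis
  proof (rule mem_big_partI[OF L is_chord_sigma_img[OF chord_l]])
    fix e :: real assume e: "e > 0"
    let ?S = "{x\<in>L. chord_dist x l < e / d}"
    have "big (sigma_img d ` ?S)"
      using big_near_big_part[OF l] e d
      by (intro big_image finite_sigma_img_fibre_in_lamination[OF d L]) auto
    moreover have "sigma_img d ` ?S \<subseteq> {x\<in>L. chord_dist x (sigma_img d l) < e}"
    proof clarify
      fix x assume x: "x \<in> L" "chord_dist x l < e / d"
      have "chord_dist (sigma_img d x) (sigma_img d l) \<le> d * chord_dist x l"
        by (rule chord_dist_sigma_img_le[OF lamination_chord[OF L x(1)] chord_l])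
      also have "\<dots> < e" using x(2) d by (simp add: field_simps)
      finally show "sigma_img d x \<in> L \<and> chord_dist (sigma_img d x) (sigma_img d l) < e"
        using sibling_invariant_image[OF SI x(1)] by simp
    qed
    ultimately show "big {x\<in>L. chord_dist x (sigma_img d l) < e}" by (rule big_mono)
  qed
qed

text \<open>The preimage is found in the finite fibre of \<open>\<sigma>\<^sub>d\<close> over \<open>l\<close>: leaves mapped close to
  \<open>l\<close> are close to that fibre, and there are \<open>big\<close> many of them.\<close>

lemma big_part_preimage:
  assumes d: "d > 0" and SI: "sibling_invariant d L" and l: "l \<in> big_part L"
  shows "\<exists>k\<in>big_part L. sigma_img d k = l"
proof -
  have L: "lamination L" using SI by (rule sibling_invariant_lamination)
  have chord_l: "is_chord l" using l big_part_subset lamination_chord[OF L] by blast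
  define K where "K = {k. is_chord k \<and> sigma_img d k = l}"
  have big_near_K: "big (\<Union>k\<in>K. {x\<in>L. chord_dist x k < e})" if e: "e > 0" for e
  proof -
    obtain \<delta> where \<delta>: "\<delta> > 0" "\<And>x. is_chord x \<Longrightarrow> chord_dist (sigma_img d x) l < \<delta> \<Longrightarrow>
        \<exists>k. is_chord k \<and> sigma_img d k = l \<and> chord_dist x k < e"
      using near_fibre_if_image_near[OF chord_l e, where d = d] by blast
    define P where "P = {x\<in>L. chord_dist (sigma_img d x) l < \<delta>}"
    have "{y\<in>L. chord_dist y l < \<delta>} \<subseteq> sigma_img d ` P"
      using sibling_invariant_preimage[OF SI] by (fastforce simp: P_def)
    then have "big P"
      using big_near_big_part[OF l \<delta>(1)] big_mono big_image_rev by blast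
    moreover have "P \<subseteq> (\<Union>k\<in>K. {x\<in>L. chord_dist x k < e})"
      using \<delta>(2) lamination_chord[OF L] by (fastforce simp: P_def K_def)
    ultimately show ?thesis by (rule big_mono)
  qed
  have "\<exists>k\<in>K. \<forall>e>0. big {x\<in>L. chord_dist x k < e}"
  proof (rule big_for_some_index)
    show "finite K" unfolding K_def by (rule finite_sigma_img_chord_fibre[OF d])
  qed (use big_near_K in auto)
  then obtain k where k: "k \<in> K" "\<And>e. e > 0 \<Longrightarrow> big {x\<in>L. chord_dist x k < e}"
    by blast
  then have "k \<in> big_part L" by (intro mem_big_partI[OF L]) (auto simp: K_def)
  then show ?thesis using k(1) by (auto simp: K_def)
qed

lemma mem_big_part_if_big_siblings:
  assumes d: "d > 0" and L: "lamination L" and "is_chord k"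
    and near: "\<And>e. e > 0 \<Longrightarrow> \<exists>S\<subseteq>L. big S \<and>
      (\<forall>m\<in>S. h m \<in> L \<and> sigma_img d (h m) = sigma_img d m \<and> chord_dist (h m) k < e)"
  shows "k \<in> big_part L"
proof (rule mem_big_partI[OF L assms(3)])
  fix e :: real assume "e > 0"
  then obtain S where S: "S \<subseteq> L" "big S"
    "\<forall>m\<in>S. h m \<in> L \<and> sigma_img d (h m) = sigma_img d m \<and> chord_dist (h m) k < e"
    using near by blast
  have "{m\<in>S. h m = y} \<subseteq> {m\<in>S. sigma_img d m = sigma_img d y}" for y
    using S(3) by force
  then have "finite {m\<in>S. h m = y}" for y
    by (rule finite_subset[OF _ finite_sigma_img_fibre_in_lamination[OF d L S(1)]])
  then have "big (h ` S)" by (rule big_image[OF S(2)])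
  moreover have "h ` S \<subseteq> {x\<in>L. chord_dist x k < e}" using S(3) by blast
  ultimately show "big {x\<in>L. chord_dist x k < e}" by (rule big_mono)
qed

text \<open>Siblings of a nondegenerate leaf of the \<open>big\<close> part: choose, among the finitely many
  tuples of chords in the fibre of \<open>\<sigma>\<^sub>d(l)\<close>, one approximated by the sibling families of
  \<open>big\<close> many leaves near \<open>l\<close>; it is the limit of sibling families.\<close>

lemma big_part_sibling_family:
  assumes d: "d > 0" and SI: "sibling_invariant d L" and l: "l \<in> big_part L"
    and nc: "\<not> critical d l" and nd: "nondegenerate l"
  shows "\<exists>f. sibling_family d (big_part L) l f"
proof -
  have L: "lamination L" using SI by (rule sibling_invariant_lamination)
  obtain a b where ab: "l = {a, b}" "cmod a = 1" "cmod b = 1"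
    using l big_part_subset lamination_chord[OF L] by (meson is_chordE subsetD)
  have "a \<noteq> b" using nd ab(1) unfolding nondegenerate_def by auto
  then have ad: "a ^ d \<noteq> b ^ d" using nc ab(1) unfolding critical_def by blast
  define g where "g m = (SOME f. sibling_family d L m f)" for m
  have g: "sibling_family d L m (g m)" if "m \<in> L" "\<not> critical d m" for m
    using SI that unfolding sibling_invariant_iff g_def by (metis someI_ex)
  define K where "K = {k. is_chord k \<and> sigma_img d k = sigma_img d l}"
  define A where "A e \<tau> = {m\<in>L. chord_dist m l < e \<and> \<not> critical d m \<and>
      (\<forall>i<d. chord_dist (g m i) (\<tau> i) < e)}" for e \<tau>
  have "\<exists>\<tau>\<in>(\<Pi>\<^sub>E i\<in>{..<d}. K). \<forall>e>0. big (A e \<tau>)"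
  proof (rule big_for_some_index)
    show "finite (\<Pi>\<^sub>E i\<in>{..<d}. K)"
      unfolding K_def by (intro finite_PiE finite_sigma_img_chord_fibre[OF d]) simp
    show "big (\<Union>\<tau>\<in>(\<Pi>\<^sub>E i\<in>{..<d}. K). A e \<tau>)" if "e > 0" for e
    proof -
      obtain e' where "e' > 0" "{m\<in>L. chord_dist m l < e'} \<subseteq> (\<Union>\<tau>\<in>(\<Pi>\<^sub>E i\<in>{..<d}. K). A e \<tau>)"
        using sibling_tuples_cover[OF d L ab ad g \<open>e > 0\<close>] unfolding K_def A_def by blast
      then show ?thesis using big_near_big_part[OF l] big_mono by blast
    qed
  qed (auto simp: A_def)
  then obtain \<tau> where \<tau>: "\<tau> \<in> (\<Pi>\<^sub>E i\<in>{..<d}. K)" "\<And>e. e > 0 \<Longrightarrow> big (A e \<tau>)" by blast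
  have "\<forall>n. \<exists>m. m \<in> A (inverse (real (Suc n))) \<tau>"
    using big_nonempty[OF \<tau>(2)] by (metis ex_in_conv of_nat_0_less_iff positive_imp_inverse_positive zero_less_Suc)
  then obtain m where m: "\<And>n. m n \<in> A (inverse (real (Suc n))) \<tau>" by metis
  have "sibling_family d L l \<tau>"
  proof (rule sibling_family_limit[OF d L ab ad])
    show "sibling_family d L (m n) (g (m n))" for n using m[of n] g by (simp add: A_def)
    show "(\<lambda>n. chord_dist (m n) l) \<longlonglongrightarrow> 0"
      using m by (intro tendsto_0_if_lt_inverse_Suc chord_dist_nonneg) (simp add: A_def)
    show "is_chord (\<tau> i)" if "i < d" for i using \<tau>(1) that by (auto simp: K_def)
    show "(\<lambda>n. chord_dist (g (m n) i) (\<tau> i)) \<longlonglongrightarrow> 0" if "i < d" for i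
      using m that by (intro tendsto_0_if_lt_inverse_Suc chord_dist_nonneg) (simp add: A_def)
  qed
  moreover have "\<tau> i \<in> big_part L" if i: "i < d" for i
  proof (rule mem_big_part_if_big_siblings[OF d L, where h = "\<lambda>m. g m i"])
    show "is_chord (\<tau> i)" using \<tau>(1) i by (auto simp: K_def)
    show "\<exists>S\<subseteq>L. big S \<and> (\<forall>m\<in>S. g m i \<in> L \<and> sigma_img d (g m i) = sigma_img d m \<and>
        chord_dist (g m i) (\<tau> i) < e)" if "e > 0" for e
      using \<tau>(2)[OF that] g i unfolding A_def sibling_family_def
      by (intro exI[of _ "A e \<tau>"]) (auto simp: A_def)
  qed
  ultimately show ?thesis unfolding sibling_family_def by blast
qed

theorem sibling_invariant_big_part:
  assumes d: "d > 0" and SI: "sibling_invariant d L"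
  shows "sibling_invariant d (big_part L)"
proof -
  have L: "lamination L" using SI by (rule sibling_invariant_lamination)
  have "\<exists>f. sibling_family d (big_part L) l f" if l: "l \<in> big_part L" "\<not> critical d l" for l
  proof (cases "nondegenerate l")
    case True
    then show ?thesis using big_part_sibling_family[OF d SI l] by blast
  next
    case False
    then obtain a where "l = {a}" "cmod a = 1"
      using l(1) big_part_subset lamination_chord[OF L]
      by (metis is_chordE insert_absorb2 nondegenerate_def subsetD)
    then show ?thesis
      using point_leaf_sibling_family[OF d lamination_big_part[OF L]] by blast
  qed
  then show ?thesis
    unfolding sibling_invariant_iff
    using lamination_big_part[OF L] big_part_image[OF d SI] big_part_preimage[OF d SI] by blast
qed

end

section \<open>The perfect part and isolated leaves\<close>

interpretation uncountable_size: size_notion "\<lambda>S. uncountable S"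
proof
  fix S T A B :: "complex set set" and f :: "complex set \<Rightarrow> complex set"
  show "uncountable S \<Longrightarrow> S \<subseteq> T \<Longrightarrow> uncountable T" using countable_subset by blast
  show "uncountable (A \<union> B) \<Longrightarrow> uncountable A \<or> uncountable B" by simp
  show "\<not> uncountable ({} :: complex set set)" by simp
  show "uncountable (f ` S) \<Longrightarrow> uncountable S" using countable_image by blast
  show "uncountable S \<Longrightarrow> uncountable S" .
  assume S: "uncountable S" "\<And>y. finite {x\<in>S. f x = y}"
  show "uncountable (f ` S)"
  proof
    assume "countable (f ` S)"
    then have "countable (\<Union>y\<in>f ` S. {x\<in>S. f x = y})"
      using S(2) countable_finite by blast
    moreover have "S = (\<Union>y\<in>f ` S. {x\<in>S. f x = y})" by blast
    ultimately show False using S(1) by simp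
  qed
qed

interpretation infinite_size: size_notion "\<lambda>S. infinite S"
proof
  fix S T A B :: "complex set set" and f :: "complex set \<Rightarrow> complex set"
  show "infinite S \<Longrightarrow> S \<subseteq> T \<Longrightarrow> infinite T" using finite_subset by blast
  show "infinite (A \<union> B) \<Longrightarrow> infinite A \<or> infinite B" by simp
  show "\<not> infinite ({} :: complex set set)" by simp
  show "infinite (f ` S) \<Longrightarrow> infinite S" using finite_imageI by blast
  show "uncountable S \<Longrightarrow> infinite S" using uncountable_infinite by blast
  assume S: "infinite S" "\<And>y. finite {x\<in>S. f x = y}"
  show "infinite (f ` S)"
  proof
    assume "finite (f ` S)"
    then have "finite (\<Union>y\<in>f ` S. {x\<in>S. f x = y})" using S(2) by blast
    moreover have "S = (\<Union>y\<in>f ` S. {x\<in>S. f x = y})" by blast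
    ultimately show False using S(1) by simp
  qed
qed

lemma perfect_part_eq_uncountable_part:
  assumes L: "lamination L"
  shows "perfect_part L = uncountable_size.big_part L"
  unfolding perfect_part_def uncountable_size.big_part_def
proof (intro Collect_cong conj_cong refl)
  fix l assume "l \<in> L"
  then have chord_l: "is_chord l" by (rule lamination_chord[OF L])
  show "(\<forall>e>0. uncountable {l'\<in>L. hausdist (geom l') (geom l) < e}) \<longleftrightarrow>
      (\<forall>e>0. uncountable {l'\<in>L. chord_dist l' l < e})"
  proof (intro iffI allI impI)
    fix e :: real assume H: "\<forall>e>0. uncountable {l'\<in>L. hausdist (geom l') (geom l) < e}" "e > 0"
    obtain \<eta> where "\<eta> > 0" and \<eta>: "\<And>x y. is_chord x \<Longrightarrow> is_chord y \<Longrightarrow>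
        hausdist (geom x) (geom y) < \<eta> \<Longrightarrow> chord_dist x y < e"
      using chord_dist_small_if_hausdist_small[OF H(2)] by blast
    have "{l'\<in>L. hausdist (geom l') (geom l) < \<eta>} \<subseteq> {l'\<in>L. chord_dist l' l < e}"
      using \<eta>[OF lamination_chord[OF L] chord_l] by auto
    then show "uncountable {l'\<in>L. chord_dist l' l < e}"
      using H(1) \<open>\<eta> > 0\<close> countable_subset by blast
  next
    fix e :: real assume H: "\<forall>e>0. uncountable {l'\<in>L. chord_dist l' l < e}" "e > 0"
    have "{l'\<in>L. chord_dist l' l < e} \<subseteq> {l'\<in>L. hausdist (geom l') (geom l) < e}"
      using hausdist_le_chord_dist[OF lamination_chord[OF L] chord_l] by fastforce
    then show "uncountable {l'\<in>L. hausdist (geom l') (geom l) < e}"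
      using H countable_subset by blast
  qed
qed

lemma not_isolated_leaf_iff:
  assumes L: "lamination C" and l: "l \<in> C"
  shows "\<not> isolated_leaf C l \<longleftrightarrow> (\<forall>e>0. \<exists>l'\<in>C. l' \<noteq> l \<and> chord_dist l' l < e)"
proof -
  have chord_l: "is_chord l" using lamination_chord[OF L l] .
  show ?thesis unfolding isolated_leaf_def not_not
  proof (intro iffI allI impI)
    fix e :: real assume H: "\<forall>e>0. \<exists>l'\<in>C. l' \<noteq> l \<and> hausdist (geom l') (geom l) < e" and "e > 0"
    obtain \<eta> where "\<eta> > 0" and \<eta>: "\<And>x y. is_chord x \<Longrightarrow> is_chord y \<Longrightarrow>
        hausdist (geom x) (geom y) < \<eta> \<Longrightarrow> chord_dist x y < e"
      using chord_dist_small_if_hausdist_small[OF \<open>e > 0\<close>] by blast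
    obtain l' where "l' \<in> C" "l' \<noteq> l" "hausdist (geom l') (geom l) < \<eta>"
      using H \<open>\<eta> > 0\<close> by blast
    then show "\<exists>l'\<in>C. l' \<noteq> l \<and> chord_dist l' l < e"
      using \<eta>[OF lamination_chord[OF L] chord_l] by blast
  next
    fix e :: real assume "\<forall>e>0. \<exists>l'\<in>C. l' \<noteq> l \<and> chord_dist l' l < e" "e > 0"
    then obtain l' where "l' \<in> C" "l' \<noteq> l" "chord_dist l' l < e" by blast
    then show "\<exists>l'\<in>C. l' \<noteq> l \<and> hausdist (geom l') (geom l) < e"
      using hausdist_le_chord_dist[OF lamination_chord[OF L] chord_l, of l'] by fastforce
  qed
qed

lemma not_isolated_leaf_iff_infinite_part:
  assumes L: "lamination C" and l: "l \<in> C"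
  shows "\<not> isolated_leaf C l \<longleftrightarrow> l \<in> infinite_size.big_part C"
proof -
  have "(\<forall>e>0. \<exists>l'\<in>C. l' \<noteq> l \<and> chord_dist l' l < e) \<longleftrightarrow> (\<forall>e>0. infinite {l'\<in>C. chord_dist l' l < e})"
  proof (intro iffI allI impI)
  fix e :: real assume approx: "\<forall>e>0. \<exists>l'\<in>C. l' \<noteq> l \<and> chord_dist l' l < e" and "e > 0"
  show "infinite {l'\<in>C. chord_dist l' l < e}"
  proof
    assume fin: "finite {l'\<in>C. chord_dist l' l < e}"
    define F where "F = {l'\<in>C. chord_dist l' l < e} - {l}"
    have "chord_dist x l > 0" if "x \<in> F" for x
    proof -
      have "x \<in> C" "x \<noteq> l" using that unfolding F_def by auto
      moreover obtain u v p q where "x = {u, v}" "l = {p, q}"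
        using lamination_chord[OF L \<open>x \<in> C\<close>] lamination_chord[OF L l] unfolding is_chord_iff by blast
      ultimately show ?thesis using chord_dist_pos by blast
    qed
    then have "Min (insert e ((\<lambda>x. chord_dist x l) ` F)) > 0"
      using fin \<open>e > 0\<close> by (simp add: F_def)
    then obtain l' where l': "l' \<in> C" "l' \<noteq> l" "chord_dist l' l < Min (insert e ((\<lambda>x. chord_dist x l) ` F))"
      using approx by blast
    then have "l' \<in> F" using fin by (simp add: F_def)
    then have "Min (insert e ((\<lambda>x. chord_dist x l) ` F)) \<le> chord_dist l' l"
      using fin by (intro Min_le) (auto simp: F_def)
    then show False using l'(3) by simp
  qed
next
  fix e :: real assume "\<forall>e>0. infinite {l'\<in>C. chord_dist l' l < e}" "e > 0"
  then have "\<not> {l'\<in>C. chord_dist l' l < e} \<subseteq> {l}" using finite_subset by blast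
  then show "\<exists>l'\<in>C. l' \<noteq> l \<and> chord_dist l' l < e" by blast
qed
  then show ?thesis
    unfolding not_isolated_leaf_iff[OF L l] infinite_size.big_part_def using l by blast
qed

lemma uncountable_long_leaves:
  assumes "uncountable_lam L"
  obtains \<rho> :: real where "\<rho> > 0" "uncountable {l\<in>L. \<exists>u v. l = {u, v} \<and> \<rho> \<le> cmod (u - v)}"
proof -
  define N where "N k = {l\<in>L. \<exists>u v. l = {u, v} \<and> inverse (real (Suc k)) \<le> cmod (u - v)}" for k
  have "{l\<in>L. nondegenerate l} \<subseteq> (\<Union>k. N k)"
  proof
    fix l assume "l \<in> {l\<in>L. nondegenerate l}"
    then obtain u v where "l \<in> L" "u \<noteq> v" "l = {u, v}" unfolding nondegenerate_def by blast
    moreover have "0 < cmod (u - v)" using \<open>u \<noteq> v\<close> by simp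
    then obtain n where "inverse (real (Suc n)) < cmod (u - v)"
      using reals_Archimedean by blast
    ultimately have "l \<in> N n" unfolding N_def by (blast intro: less_imp_le)
    then show "l \<in> (\<Union>k. N k)" by blast
  qed
  moreover have "uncountable {l\<in>L. nondegenerate l}"
    using assms unfolding uncountable_lam_def countable_lam_def .
  ultimately have "uncountable (\<Union>k. N k)" using countable_subset by blast
  then obtain k where "uncountable (N k)" by blast
  then show ?thesis using that[of "inverse (real (Suc k))"] by (simp add: N_def)
qed

text \<open>A condensation point of the long leaves is a long leaf of the perfect part.\<close>

lemma uncountable_part_nondegenerate_leaf:
  assumes L: "lamination L" and U: "uncountable_lam L"
  obtains l where "l \<in> uncountable_size.big_part L" "nondegenerate l"
proof -
  obtain \<rho> :: real where "\<rho> > 0" and unc: "uncountable {l\<in>L. \<exists>u v. l = {u, v} \<and> \<rho> \<le> cmod (u - v)}"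
    using uncountable_long_leaves[OF U] by blast
  define N where "N = {l\<in>L. \<exists>u v. l = {u, v} \<and> \<rho> \<le> cmod (u - v)}"
  have "uncountable N" unfolding N_def by (rule unc)
  moreover have "\<And>l. l \<in> N \<Longrightarrow> is_chord l" using lamination_chord[OF L] by (simp add: N_def)
  ultimately obtain a b where ab: "cmod a = 1" "cmod b = 1"
    "\<And>e. e > 0 \<Longrightarrow> uncountable {x\<in>N. chord_dist x {a, b} < e}"
    using uncountable_size.condensation by metis
  have close: "\<rho> \<le> cmod (a - b) + 2 * e" if "e > 0" for e
  proof -
    have "{x\<in>N. chord_dist x {a, b} < e} \<noteq> {}"
      using ab(3)[OF that] by (metis countable_empty)
    then obtain u v where "chord_dist {u, v} {a, b} < e" "\<rho> \<le> cmod (u - v)"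
      unfolding N_def by blast
    then show ?thesis using length_lt_if_chord_dist_lt[of u v a b e] by linarith
  qed
  have "\<rho> \<le> cmod (a - b) + e" if "e > 0" for e
    using close[of "e / 2"] that by simp
  then have "\<rho> \<le> cmod (a - b)" by (rule field_le_epsilon)
  then have "a \<noteq> b" using \<open>\<rho> > 0\<close> by auto
  then have "nondegenerate {a, b}" unfolding nondegenerate_def by blast
  moreover have "{a, b} \<in> uncountable_size.big_part L"
  proof (rule uncountable_size.mem_big_partI[OF L is_chord_pair[OF ab(1,2)]])
    fix e :: real assume "e > 0"
    have "{x\<in>N. chord_dist x {a, b} < e} \<subseteq> {x\<in>L. chord_dist x {a, b} < e}"
      unfolding N_def by blast
    then show "uncountable {x\<in>L. chord_dist x {a, b} < e}"
      using ab(3)[OF \<open>e > 0\<close>] countable_subset by blast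
  qed
  ultimately show ?thesis using that by blast
qed

lemma chief_perfect_if_not_isolated:
  assumes d: "d > 0" and C: "chief d C"
    and l: "l \<in> C" "nondegenerate l" "\<not> isolated_leaf C l"
  shows "perfect_lam C"
proof -
  have SI: "sibling_invariant d C" using C by (simp add: chief_def)
  then have LC: "lamination C" by (rule sibling_invariant_lamination)
  have minimal: "\<And>L'. L' \<subseteq> C \<Longrightarrow> sibling_invariant d L' \<Longrightarrow> nonempty_lam L' \<Longrightarrow> L' = C"
    using C unfolding chief_def by blast
  have "nonempty_lam (infinite_size.big_part C)"
    using l not_isolated_leaf_iff_infinite_part[OF LC l(1)] unfolding nonempty_lam_def by blast
  then have "infinite_size.big_part C = C"
    by (rule minimal[OF infinite_size.big_part_subset infinite_size.sibling_invariant_big_part[OF d SI]])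
  then show ?thesis
    using not_isolated_leaf_iff_infinite_part[OF LC] unfolding perfect_lam_def by blast
qed

lemma countable_if_leaves_isolated:
  assumes L: "lamination C" and iso: "\<And>l. l \<in> C \<Longrightarrow> nondegenerate l \<Longrightarrow> isolated_leaf C l"
  shows "countable_lam C"
proof (rule ccontr)
  assume "\<not> countable_lam C"
  then obtain l where l: "l \<in> uncountable_size.big_part C" "nondegenerate l"
    using uncountable_part_nondegenerate_leaf[OF L] unfolding uncountable_lam_def by blast
  then have "l \<in> C" "\<forall>e>0. infinite {l'\<in>C. chord_dist l' l < e}"
    unfolding uncountable_size.big_part_def by (simp_all add: uncountable_infinite)
  then have "\<not> isolated_leaf C l"
    using not_isolated_leaf_iff_infinite_part[OF L] by (simp add: infinite_size.big_part_def)
  then show False using iso \<open>l \<in> C\<close> l(2) by blast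
qed

theorem lemmal:
  fixes d :: nat and L :: "complex set set"
  assumes "d \<ge> 2"
    and "sibling_invariant d L"
  shows "sibling_invariant d (perfect_part L)
    \<and> (uncountable_lam L \<longrightarrow> perfect_part L \<subseteq> L \<and> nonempty_lam (perfect_part L))
    \<and> (\<forall>C. chief d C \<longrightarrow>
          perfect_lam C \<or>
          (countable_lam C \<and> (\<forall>l\<in>C. nondegenerate l \<longrightarrow> isolated_leaf C l)))"
proof (intro conjI impI allI)
  have d: "d > 0" using assms(1) by simp
  have L: "lamination L" using assms(2) by (rule sibling_invariant_lamination)
  show "sibling_invariant d (perfect_part L)"
    unfolding perfect_part_eq_uncountable_part[OF L]
    by (rule uncountable_size.sibling_invariant_big_part[OF d assms(2)])
  show "perfect_part L \<subseteq> L" unfolding perfect_part_def by blast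
  show "nonempty_lam (perfect_part L)" if "uncountable_lam L"
    using uncountable_part_nondegenerate_leaf[OF L that]
    unfolding perfect_part_eq_uncountable_part[OF L] nonempty_lam_def by blast
  show "perfect_lam C \<or> (countable_lam C \<and> (\<forall>l\<in>C. nondegenerate l \<longrightarrow> isolated_leaf C l))"
    if C: "chief d C" for C
  proof -
    have "sibling_invariant d C" using C by (simp add: chief_def)
    then have "lamination C" by (rule sibling_invariant_lamination)
    then show ?thesis
      using chief_perfect_if_not_isolated[OF d C] countable_if_leaves_isolated by blast
  qed
qed

end
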